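(* Let $H={\rm SL}_q(N)$ with CQT structure $\sigma$ as in the context, and in $H^0$ put ${\bf l}_{ij}=\sigma(-,x_{ij})$, ${\bf r}_{ij}=\sigma(x_{ij},-)$. Then ${\bf l}_{ii}={\bf r}_{ii}$ is an invertible grouplike element of $H^0$. Define for $1\le i\le N$, $1\le s\le N-1$: $\widehat K_i={\bf l}_{ii}$, $E_s={\bf l}_{s+1,s+1}^{-1}{\bf l}_{s+1,s}$, $F_s=(q-q^{-1})^{-2}{\bf r}_{ss}^{-1}{\bf r}_{s,s+1}$. Then the Hopf algebra $H_l=\{\sigma(-,x)\mid x\in H\}$ is generated as an algebra by the $\widehat K_i^{\pm1}$ and the $E_s$, and these satisfy $\widehat K_i\widehat K_j=\widehat K_j\widehat K_i$, $\widehat K_i\widehat K_i^{-1}=\widehat K_i^{-1}\widehat K_i=\varepsilon$, $\widehat K_1\widehat K_2\cdots\widehat K_N=\varepsilon$, $\widehat K_iE_t\widehat K_i^{-1}=q^{\delta_{i,t}-\delta_{i,t+1}}E_t$, $E_tE_s=E_sE_t$ if $|s-t|>1$, and $E_s^2E_t-(q+q^{-1})E_sE_tE_s+E_tE_s^2=0$ if $|s-t|=1$. Similarly $H_r=\{\sigma(x,-)\mid x\in H\}$ is generated as an algebra by the $\widehat K_i^{\pm1}$ and the $F_s$, which satisfy the same relations among the $\widehat K_i$, and $\widehat K_iF_t\widehat K_i^{-1}=q^{\delta_{i,t+1}-\delta_{i,t}}F_t$, $F_tF_s=F_sF_t$ if $|s-t|>1$, $F_s^2F_t-(q+q^{-1})F_sF_tF_s+F_tF_s^2=0$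 if $|s-t|=1$.
   Context: $k$ is a field, $q\in k$ with $q\neq0$ and $q^2\neq1$, $N\ge2$, $z\in k$ with $z^N=q^{-1}$. ${\rm SL}_q(N)$ is the Hopf algebra generated by $x_{ij}$ ($1\le i,j\le N$) with relations $x_{im}x_{in}=qx_{in}x_{im}$ ($n<m$), $x_{jm}x_{im}=qx_{im}x_{jm}$ ($i<j$), $x_{jn}x_{im}=x_{im}x_{jn}$ ($i<j$, $n<m$), $x_{jm}x_{in}-x_{in}x_{jm}=(q-q^{-1})x_{im}x_{jn}$ ($i<j$, $n<m$), $\sum_{p\in S_N}(-q)^{-l(p)}x_{1p(1)}\cdots x_{Np(N)}=1$, comultiplication $\Delta(x_{ij})=\sum_kx_{ik}\otimes x_{kj}$, counit $\varepsilon(x_{ij})=\delta_{ij}$. $\sigma$ is its CQT structure (a convolution invertible skew pairing $H\otimes H\to k$ with $\sigma(hh',g)=\sigma(h,g_1)\sigma(h',g_2)$, $\sigma(g,hh')=\sigma(g_2,h)\sigma(g_1,h')$, $\sigma(1,h)=\sigma(h,1)=\varepsilon(h)$, $\sigma(h_1,h'_1)h_2h'_2=h'_1h_1\sigma(h_2,h'_2)$) determined by $\sigma(x_{im},x_{jn})=z\big(q^{\delta_{ij}}\delta_{mi}\delta_{nj}+[j>i](q-q^{-1})\delta_{mj}\delta_{ni}\big)$, $[j>i]\in\{0,1\}$ the indicator of $j>i$. $H^0$ is the finite dual; products in $H^0$ are convolution products. *)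

theory Defs
  imports Main "HOL-Combinatorics.Permutations"
begin

text \<open>
The generator x_ij of SL_q(N) is the letter (i,j) (indices 1..N).
Words (lists of letters) are the monomials, a basis of the free algebra k<x_ij>.
A linear functional on H = SL_q(N) is the same as a function  word => k
(its values on monomials) that vanishes on the defining ideal; two such
functionals are equal in H^* iff they agree on all valid words.
\<close>

type_synonym letter = "nat \<times> nat"
type_synonym word = "letter list"

definition valid :: "nat \<Rightarrow> word \<Rightarrow> bool" where
  "valid N w \<longleftrightarrow> (\<forall>(i,j)\<in>set w. i \<in> {1..N} \<and> j \<in> {1..N})"

definition eqH :: "nat \<Rightarrow> (word \<Rightarrow> 'k) \<Rightarrow> (word \<Rightarrow> 'k) \<Rightarrow> bool" where
  "eqH N f g \<longleftrightarrow> (\<forall>w. valid N w \<longrightarrow> f w = g w)"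

text \<open>counit: algebra map with eps(x_ij) = delta_ij; it is the unit of H^*\<close>
definition eps :: "word \<Rightarrow> 'k::field" where
  "eps w = (if (\<forall>(i,j)\<in>set w. i = j) then 1 else 0)"

text \<open>convolution product in H^*, via
  Delta(x_{i1 j1}...x_{in jn}) = sum_{k1..kn} x_{i1 k1}...x_{in kn} (x) x_{k1 j1}...x_{kn jn}\<close>
definition conv :: "nat \<Rightarrow> (word \<Rightarrow> 'k::field) \<Rightarrow> (word \<Rightarrow> 'k) \<Rightarrow> word \<Rightarrow> 'k" where
  "conv N f g w = (\<Sum>ks\<in>{ks. length ks = length w \<and> set ks \<subseteq> {1..N}}.
       f (zip (map fst w) ks) * g (zip ks (map snd w)))"

definition inv_count :: "nat \<Rightarrow> (nat \<Rightarrow> nat) \<Rightarrow> nat" where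
  "inv_count N p = card {(a,b). a \<in> {1..N} \<and> b \<in> {1..N} \<and> a < b \<and> p a > p b}"

text \<open>f vanishes on the two-sided ideal generated by the defining relations of SL_q(N),
  i.e. f is (the pullback of) a linear functional on H\<close>
definition resp_SL :: "nat \<Rightarrow> 'k::field \<Rightarrow> (word \<Rightarrow> 'k) \<Rightarrow> bool" where
  "resp_SL N q f \<longleftrightarrow>
    (\<forall>u v. valid N u \<longrightarrow> valid N v \<longrightarrow>
      (\<forall>i\<in>{1..N}. \<forall>m\<in>{1..N}. \<forall>n\<in>{1..N}. n < m \<longrightarrow>
          f (u @ [(i,m),(i,n)] @ v) = q * f (u @ [(i,n),(i,m)] @ v)) \<and>
      (\<forall>i\<in>{1..N}. \<forall>j\<in>{1..N}. \<forall>m\<in>{1..N}. i < j \<longrightarrow>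
          f (u @ [(j,m),(i,m)] @ v) = q * f (u @ [(i,m),(j,m)] @ v)) \<and>
      (\<forall>i\<in>{1..N}. \<forall>j\<in>{1..N}. \<forall>m\<in>{1..N}. \<forall>n\<in>{1..N}. i < j \<longrightarrow> n < m \<longrightarrow>
          f (u @ [(j,n),(i,m)] @ v) = f (u @ [(i,m),(j,n)] @ v)) \<and>
      (\<forall>i\<in>{1..N}. \<forall>j\<in>{1..N}. \<forall>m\<in>{1..N}. \<forall>n\<in>{1..N}. i < j \<longrightarrow> n < m \<longrightarrow>
          f (u @ [(j,m),(i,n)] @ v) - f (u @ [(i,n),(j,m)] @ v)
            = (q - inverse q) * f (u @ [(i,m),(j,n)] @ v)) \<and>
      (\<Sum>p\<in>{p. p permutes {1..N}}.
          inverse ((- q) ^ inv_count N p) * f (u @ map (\<lambda>a. (a, p a)) [1..<N+1] @ v))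
        = f (u @ v))"

text \<open>finite dual H^0: f is a functional on H whose left/right translates
  (w |-> f(u w v), u,v in H) span a finite-dimensional space\<close>
definition finite_dual :: "nat \<Rightarrow> 'k::field \<Rightarrow> (word \<Rightarrow> 'k) \<Rightarrow> bool" where
  "finite_dual N q f \<longleftrightarrow> resp_SL N q f \<and>
    (\<exists>gs :: (word \<Rightarrow> 'k) list. \<forall>u v. valid N u \<longrightarrow> valid N v \<longrightarrow>
       (\<exists>cs :: nat \<Rightarrow> 'k. \<forall>w. valid N w \<longrightarrow>
           f (u @ w @ v) = (\<Sum>t<length gs. cs t * (gs ! t) w)))"

text \<open>grouplike in H^0 = algebra map H -> k\<close>
definition grouplike :: "nat \<Rightarrow> (word \<Rightarrow> 'k::field) \<Rightarrow> bool" where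
  "grouplike N f \<longleftrightarrow> f [] = 1 \<and> (\<forall>u v. valid N u \<longrightarrow> valid N v \<longrightarrow> f (u @ v) = f u * f v)"

text \<open>values of sigma on generators\<close>
definition sgen :: "'k::field \<Rightarrow> 'k \<Rightarrow> letter \<Rightarrow> letter \<Rightarrow> 'k" where
  "sgen q z a b = (case a of (i,m) \<Rightarrow> case b of (j,n) \<Rightarrow>
     z * ((if i = j then q else 1) * (if m = i \<and> n = j then 1 else 0)
          + (if j > i then q - inverse q else 0) * (if m = j \<and> n = i then 1 else 0)))"

text \<open>sig1 g a = sigma(a, g) for a letter a, using sigma(g,hh') = sigma(g_2,h) sigma(g_1,h')\<close>
primrec sig1 :: "nat \<Rightarrow> 'k::field \<Rightarrow> 'k \<Rightarrow> word \<Rightarrow> letter \<Rightarrow> 'k" where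
  "sig1 N q z [] a = eps [a]"
| "sig1 N q z (b # g) a = (\<Sum>k\<in>{1..N}. sgen q z (k, snd a) b * sig1 N q z g (fst a, k))"

text \<open>sigf w g = sigma(w, g), using sigma(hh',g) = sigma(h,g_1) sigma(h',g_2), sigma(1,-) = eps\<close>
primrec sigf :: "nat \<Rightarrow> 'k::field \<Rightarrow> 'k \<Rightarrow> word \<Rightarrow> word \<Rightarrow> 'k" where
  "sigf N q z [] = eps"
| "sigf N q z (a # w) = conv N (\<lambda>h. sig1 N q z h a) (sigf N q z w)"

definition lfun :: "nat \<Rightarrow> 'k::field \<Rightarrow> 'k \<Rightarrow> nat \<Rightarrow> nat \<Rightarrow> word \<Rightarrow> 'k" where
  "lfun N q z i j = (\<lambda>w. sigf N q z w [(i,j)])"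

definition rfun :: "nat \<Rightarrow> 'k::field \<Rightarrow> 'k \<Rightarrow> nat \<Rightarrow> nat \<Rightarrow> word \<Rightarrow> 'k" where
  "rfun N q z i j = (\<lambda>w. sigf N q z [(i,j)] w)"

definition H_l :: "nat \<Rightarrow> 'k::field \<Rightarrow> 'k \<Rightarrow> (word \<Rightarrow> 'k) set" where
  "H_l N q z = {(\<lambda>w. \<Sum>(c,g)\<leftarrow>xs. c * sigf N q z w g) | xs. \<forall>(c,g)\<in>set xs. valid N g}"

definition H_r :: "nat \<Rightarrow> 'k::field \<Rightarrow> 'k \<Rightarrow> (word \<Rightarrow> 'k) set" where
  "H_r N q z = {(\<lambda>w. \<Sum>(c,g)\<leftarrow>xs. c * sigf N q z g w) | xs. \<forall>(c,g)\<in>set xs. valid N g}"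

inductive_set alg_gen :: "nat \<Rightarrow> (word \<Rightarrow> 'k::field) set \<Rightarrow> (word \<Rightarrow> 'k) set"
  for N S where
  gen: "f \<in> S \<Longrightarrow> f \<in> alg_gen N S"
| unit: "eps \<in> alg_gen N S"
| add: "f \<in> alg_gen N S \<Longrightarrow> g \<in> alg_gen N S \<Longrightarrow> (\<lambda>w. f w + g w) \<in> alg_gen N S"
| smult: "f \<in> alg_gen N S \<Longrightarrow> (\<lambda>w. c * f w) \<in> alg_gen N S"
| mult: "f \<in> alg_gen N S \<Longrightarrow> g \<in> alg_gen N S \<Longrightarrow> conv N f g \<in> alg_gen N S"

definition generated_by :: "nat \<Rightarrow> (word \<Rightarrow> 'k::field) set \<Rightarrow> (word \<Rightarrow> 'k) set \<Rightarrow> bool" where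
  "generated_by N A S \<longleftrightarrow> (\<forall>h\<in>A. \<exists>g\<in>alg_gen N S. eqH N h g) \<and> (\<forall>g\<in>alg_gen N S. \<exists>h\<in>A. eqH N g h)"

definition sminus :: "(word \<Rightarrow> 'k::field) \<Rightarrow> (word \<Rightarrow> 'k) \<Rightarrow> word \<Rightarrow> 'k" where
  "sminus f g = (\<lambda>w. f w - g w)"

definition serre :: "nat \<Rightarrow> 'k::field \<Rightarrow> (word \<Rightarrow> 'k) \<Rightarrow> (word \<Rightarrow> 'k) \<Rightarrow> word \<Rightarrow> 'k" where
  "serre N q X Y = (\<lambda>w. conv N X (conv N X Y) w - (q + inverse q) * conv N X (conv N Y X) w
                        + conv N Y (conv N X X) w)"

definition kron :: "nat \<Rightarrow> nat \<Rightarrow> int" where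
  "kron a b = (if a = b then 1 else 0)"

end

theory Submission
  imports Defs
begin

(* The functionals l_ij = sigma(-, x_ij) can be computed letter by letter from the values of sigma
   on the generators: the matrix (l_ij) is lower triangular, l_ii is the character K_i sending
   x_rr to z q^[r = i], and products of two l's satisfy the exchange relations coming from the
   R-matrix, which are proved by induction on monomials.  For E_s = K_(s+1)^-1 l_(s+1,s), conjugation by K_i only sees the weight of
   l_(s+1,s); distant E's commute by the exchange relations; and the q-Serre relations hold because
   the commutator of l_(s+1,s) and l_(s+2,s+1) is a multiple of l_(s+2,s) l_(s+1,s+1), which
   q^2-commutes with both.  Since sigma(-, g h) = sigma(-, h) sigma(-, g), H_l is generated by the
   l_ij, and the exchange relations express every l_ij with i > j + 1 through entries closer to
   the diagonal, so H_l is generated by the K_i^(+-1) and E_s.  Reversing words and mirroring the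
   indices i -> N + 1 - i turns r_ij into l_(N+1-i,N+1-j), which transfers everything to H_r and
   the F_s. *)

section \<open>Convolution of functionals on words\<close>

lemma valid_Nil [simp]: "valid N []"
  by (simp add: valid_def)

lemma valid_Cons [simp]: "valid N (a # w) \<longleftrightarrow> fst a \<in> {1..N} \<and> snd a \<in> {1..N} \<and> valid N w"
  by (auto simp: valid_def)

lemma valid_append [simp]: "valid N (u @ v) \<longleftrightarrow> valid N u \<and> valid N v"
  by (auto simp: valid_def)

definition index_lists :: "nat \<Rightarrow> nat \<Rightarrow> nat list set" where
  "index_lists N n = {ks. length ks = n \<and> set ks \<subseteq> {1..N}}"

lemma finite_index_lists [simp]: "finite (index_lists N n)"
  unfolding index_lists_def by (rule finite_subset[OF _ finite_lists_length_eq[of "{1..N}" n]]) auto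

lemma index_lists_0: "index_lists N 0 = {[]}"
  by (auto simp: index_lists_def)

lemma index_lists_Suc: "index_lists N (Suc n) = (\<lambda>(k, ks). k # ks) ` ({1..N} \<times> index_lists N n)"
proof (rule set_eqI)
  show "ks \<in> index_lists N (Suc n) \<longleftrightarrow> ks \<in> (\<lambda>(k, ks). k # ks) ` ({1..N} \<times> index_lists N n)" for ks
    by (cases ks) (auto simp: index_lists_def image_iff)
qed

lemma index_lists_Suc_snoc: "index_lists N (Suc n) = (\<lambda>(ks, k). ks @ [k]) ` (index_lists N n \<times> {1..N})"
proof (rule set_eqI)
  show "ks \<in> index_lists N (Suc n) \<longleftrightarrow> ks \<in> (\<lambda>(ks, k). ks @ [k]) ` (index_lists N n \<times> {1..N})" for ks
    by (cases ks rule: rev_cases) (auto simp: index_lists_def image_iff)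
qed

lemma conv_index_lists:
  "conv N f g w = (\<Sum>ks\<in>index_lists N (length w). f (zip (map fst w) ks) * g (zip ks (map snd w)))"
  unfolding conv_def index_lists_def by simp

lemma conv_Nil [simp]: "conv N f g [] = f [] * g []"
  by (simp add: conv_index_lists index_lists_0)

definition shift :: "letter \<Rightarrow> (word \<Rightarrow> 'k) \<Rightarrow> word \<Rightarrow> 'k" where
  "shift a f = (\<lambda>v. f (a # v))"

lemma conv_Cons:
  "conv N f g (a # w) = (\<Sum>k\<in>{1..N}. conv N (shift (fst a, k) f) (shift (k, snd a) g) w)"
proof -
  have inj: "inj_on (\<lambda>(k, ks). k # ks) ({1..N} \<times> index_lists N (length w))"
    by (auto simp: inj_on_def)
  have "conv N f g (a # w) = (\<Sum>(k, ks)\<in>{1..N} \<times> index_lists N (length w).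
      f ((fst a, k) # zip (map fst w) ks) * g ((k, snd a) # zip ks (map snd w)))"
    unfolding conv_index_lists length_Cons index_lists_Suc
    by (subst sum.reindex[OF inj]) (simp add: case_prod_beta)
  then show ?thesis
    by (simp add: sum.cartesian_product[symmetric] conv_index_lists shift_def)
qed

lemma conv_snoc:
  "conv N f g (w @ [a]) =
     (\<Sum>k\<in>{1..N}. conv N (\<lambda>v. f (v @ [(fst a, k)])) (\<lambda>v. g (v @ [(k, snd a)])) w)"
proof -
  have inj: "inj_on (\<lambda>(ks, k). ks @ [k]) (index_lists N (length w) \<times> {1..N})"
    by (auto simp: inj_on_def)
  have "conv N f g (w @ [a]) = (\<Sum>(ks, k)\<in>index_lists N (length w) \<times> {1..N}.
      f (zip (map fst w) ks @ [(fst a, k)]) * g (zip ks (map snd w) @ [(k, snd a)]))"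
    unfolding conv_index_lists length_append_singleton index_lists_Suc_snoc
    by (subst sum.reindex[OF inj]) (auto simp: index_lists_def intro!: sum.cong)
  also have "\<dots> = (\<Sum>k\<in>{1..N}. \<Sum>ks\<in>index_lists N (length w).
      f (zip (map fst w) ks @ [(fst a, k)]) * g (zip ks (map snd w) @ [(k, snd a)]))"
    by (simp add: sum.cartesian_product[symmetric]) (rule sum.swap)
  finally show ?thesis
    by (simp add: conv_index_lists)
qed

lemma conv_add_left: "conv N (\<lambda>v. f v + g v) h w = conv N f h w + conv N g h w"
  by (simp add: conv_index_lists distrib_right sum.distrib)

lemma conv_add_right: "conv N h (\<lambda>v. f v + g v) w = conv N h f w + conv N h g w"
  by (simp add: conv_index_lists distrib_left sum.distrib)

lemma conv_scale_left: "conv N (\<lambda>v. c * f v) h = (\<lambda>w. c * conv N f h w)"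
  by (simp add: conv_index_lists sum_distrib_left mult.assoc fun_eq_iff)

lemma conv_scale_right: "conv N h (\<lambda>v. c * f v) = (\<lambda>w. c * conv N h f w)"
  by (simp add: conv_index_lists sum_distrib_left mult.left_commute fun_eq_iff)

lemma conv_zero_left [simp]: "conv N (\<lambda>v. 0) h w = 0"
  by (simp add: conv_index_lists)

lemma conv_zero_right [simp]: "conv N h (\<lambda>v. 0) w = 0"
  by (simp add: conv_index_lists)

lemma conv_sum_left: "finite S \<Longrightarrow> conv N (\<lambda>v. \<Sum>i\<in>S. f i v) h w = (\<Sum>i\<in>S. conv N (f i) h w)"
  by (simp add: conv_index_lists sum_distrib_right) (rule sum.swap)

lemma conv_sum_right: "finite S \<Longrightarrow> conv N h (\<lambda>v. \<Sum>i\<in>S. f i v) w = (\<Sum>i\<in>S. conv N h (f i) w)"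
  by (simp add: conv_index_lists sum_distrib_left) (rule sum.swap)

lemma valid_zip_index_lists:
  assumes "valid N w" "ks \<in> index_lists N (length w)"
  shows "valid N (zip (map fst w) ks)" "valid N (zip ks (map snd w))"
  using assms unfolding valid_def index_lists_def
  by (fastforce dest: set_zip_leftD set_zip_rightD)+

lemma conv_cong:
  assumes "valid N w" "\<And>v. valid N v \<Longrightarrow> f v = f' v" "\<And>v. valid N v \<Longrightarrow> g v = g' v"
  shows "conv N f g w = conv N f' g' w"
  unfolding conv_index_lists using assms valid_zip_index_lists[OF assms(1)]
  by (intro sum.cong) auto

lemma conv_assoc: "conv N (conv N f g) h = conv N f (conv N g h)"
proof
  show "conv N (conv N f g) h w = conv N f (conv N g h) w" for w
  proof (induction w arbitrary: f g h)
    case (Cons a w)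
    have "conv N (conv N f g) h (a # w) = (\<Sum>k\<in>{1..N}. \<Sum>k'\<in>{1..N}.
        conv N (conv N (shift (fst a, k') f) (shift (k', k) g)) (shift (k, snd a) h) w)"
      by (simp add: conv_Cons shift_def conv_Cons[of N f g] conv_sum_left)
    also have "\<dots> = (\<Sum>k'\<in>{1..N}. \<Sum>k\<in>{1..N}.
        conv N (shift (fst a, k') f) (conv N (shift (k', k) g) (shift (k, snd a) h)) w)"
      by (simp add: Cons.IH) (rule sum.swap)
    also have "\<dots> = conv N f (conv N g h) (a # w)"
      by (simp add: conv_Cons[of N f] shift_def conv_Cons[of N g h] conv_sum_right)
    finally show ?case .
  qed simp
qed

lemma conv_sum_list_left:
  "conv N (\<lambda>w. \<Sum>(c, g)\<leftarrow>xs. c * F g w) h v = (\<Sum>(c, g)\<leftarrow>xs. c * conv N (F g) h v)"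
  by (induction xs) (auto simp: conv_add_left conv_scale_left)

lemma conv_sum_list_right:
  "conv N h (\<lambda>w. \<Sum>(c, g)\<leftarrow>xs. c * F g w) v = (\<Sum>(c, g)\<leftarrow>xs. c * conv N h (F g) v)"
  by (induction xs) (auto simp: conv_add_right conv_scale_right)

section \<open>Diagonal characters\<close>

definition diag_char :: "(nat \<Rightarrow> 'k::field) \<Rightarrow> word \<Rightarrow> 'k" where
  "diag_char c w = (if \<forall>(i, j)\<in>set w. i = j then \<Prod>a\<leftarrow>w. c (fst a) else 0)"

lemma diag_char_Nil [simp]: "diag_char c [] = 1"
  by (simp add: diag_char_def)

lemma diag_char_Cons: "diag_char c (a # w) = (if fst a = snd a then c (fst a) * diag_char c w else 0)"
  by (cases a) (auto simp: diag_char_def)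

lemma diag_char_append: "diag_char c (u @ v) = diag_char c u * diag_char c v"
  by (induction u) (auto simp: diag_char_Cons)

lemma diag_char_cong: "(\<And>i. i \<in> {1..N} \<Longrightarrow> c i = d i) \<Longrightarrow> valid N w \<Longrightarrow> diag_char c w = diag_char d w"
  by (induction w) (auto simp: diag_char_Cons)

lemma eps_eq_diag_char: "eps = diag_char (\<lambda>_. 1)"
proof
  show "eps w = diag_char (\<lambda>_. 1) w" for w :: word
    by (induction w) (auto simp: eps_def diag_char_Cons split: if_splits)
qed

lemma shift_diag_char:
  "shift a (diag_char c) = (if fst a = snd a then (\<lambda>v. c (fst a) * diag_char c v) else (\<lambda>v. 0))"
  by (auto simp: shift_def diag_char_Cons)

lemma conv_diag_char_left_Cons:
  assumes "fst a \<in> {1..N}"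
  shows "conv N (diag_char c) f (a # w) = c (fst a) * conv N (diag_char c) (shift a f) w"
proof -
  have "conv N (diag_char c) f (a # w) =
      (\<Sum>k\<in>{1..N}. if k = fst a then c (fst a) * conv N (diag_char c) (shift a f) w else 0)"
    unfolding conv_Cons by (intro sum.cong) (auto simp: shift_diag_char conv_scale_left)
  then show ?thesis
    using assms by simp
qed

lemma conv_diag_char_right_Cons:
  assumes "snd a \<in> {1..N}"
  shows "conv N f (diag_char c) (a # w) = c (snd a) * conv N (shift a f) (diag_char c) w"
proof -
  have "conv N f (diag_char c) (a # w) =
      (\<Sum>k\<in>{1..N}. if k = snd a then c (snd a) * conv N (shift a f) (diag_char c) w else 0)"
    unfolding conv_Cons by (intro sum.cong) (auto simp: shift_diag_char conv_scale_right)
  then show ?thesis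
    using assms by simp
qed

lemma conv_diag_char_diag_char:
  "valid N w \<Longrightarrow> conv N (diag_char c) (diag_char d) w = diag_char (\<lambda>i. c i * d i) w"
  by (induction w) (simp_all add: conv_diag_char_left_Cons shift_diag_char diag_char_Cons conv_scale_right)

lemma conv_eps_right: "valid N w \<Longrightarrow> conv N f eps w = f w"
  by (induction w arbitrary: f) (simp_all add: eps_eq_diag_char conv_diag_char_right_Cons shift_def)

lemma conv_eps_left: "valid N w \<Longrightarrow> conv N eps f w = f w"
  by (induction w arbitrary: f) (simp_all add: eps_eq_diag_char conv_diag_char_left_Cons shift_def)

lemma diag_char_id_word: "diag_char c (map (\<lambda>a. (a, a)) [1..<N+1]) = (\<Prod>a\<leftarrow>[1..<N+1]. c a)"
  by (simp add: diag_char_def o_def del: upt_Suc)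

lemma diag_char_perm_word:
  assumes "p permutes {1..N}" "p \<noteq> id"
  shows "diag_char c (map (\<lambda>a. (a, p a)) [1..<N+1]) = 0"
proof -
  obtain a where "p a \<noteq> a"
    using assms(2) by (auto simp: fun_eq_iff)
  moreover from this have "a \<in> {1..N}"
    using assms(1) by (meson permutes_not_in)
  ultimately show ?thesis
    by (auto simp: diag_char_def simp del: upt_Suc)
qed

lemma inv_count_id: "inv_count N id = 0"
proof -
  have "{(a, b). a \<in> {1..N} \<and> b \<in> {1..N} \<and> a < b \<and> id a > id b} = {}"
    by auto
  then show ?thesis
    unfolding inv_count_def by (metis card.empty)
qed

lemma resp_SL_diag_char:
  assumes "(\<Prod>a\<leftarrow>[1..<N+1]. c a) = 1"
  shows "resp_SL N q (diag_char c)"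
  unfolding resp_SL_def
proof (intro allI impI conjI ballI)
  fix u v :: word
  have offdiag: "diag_char c (u @ [(i, m), (j, n)] @ v) = 0" if "i \<noteq> m \<or> j \<noteq> n" for i m j n
    using that by (auto simp: diag_char_append diag_char_Cons)
  show swap: "diag_char c (u @ [a, b] @ v) = diag_char c (u @ [b, a] @ v)" for a b
    by (simp add: diag_char_append diag_char_Cons mult_ac)
  show "diag_char c (u @ [(i, m), (i, n)] @ v) = q * diag_char c (u @ [(i, n), (i, m)] @ v)"
    if "n < m" for i m n
    using that offdiag[of i m i n] offdiag[of i n i m] by auto
  show "diag_char c (u @ [(j, m), (i, m)] @ v) = q * diag_char c (u @ [(i, m), (j, m)] @ v)"
    if "i < j" for i j m
    using that offdiag[of j m i m] offdiag[of i m j m] by auto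
  show "diag_char c (u @ [(j, m), (i, n)] @ v) - diag_char c (u @ [(i, n), (j, m)] @ v)
      = (q - inverse q) * diag_char c (u @ [(i, m), (j, n)] @ v)"
    if "i < j" "n < m" for i j m n
    using that swap[of "(j, m)" "(i, n)"] offdiag[of i m j n] by auto
  have "inverse ((- q) ^ inv_count N p) * diag_char c (u @ map (\<lambda>a. (a, p a)) [1..<N+1] @ v)
      = (if p = id then diag_char c (u @ v) else 0)" if "p permutes {1..N}" for p
  proof (cases "p = id")
    case True
    show ?thesis
      unfolding True inv_count_id unfolding id_apply diag_char_append diag_char_id_word assms by simp
  next
    case False
    then show ?thesis
      unfolding diag_char_append diag_char_perm_word[OF that False] by simp
  qed
  then show "(\<Sum>p\<in>{p. p permutes {1..N}}.
      inverse ((- q) ^ inv_count N p) * diag_char c (u @ map (\<lambda>a. (a, p a)) [1..<N+1] @ v))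
      = diag_char c (u @ v)"
    by (simp add: permutes_id finite_permutations del: upt_Suc)
qed

lemma finite_dual_diag_char:
  assumes "(\<Prod>a\<leftarrow>[1..<N+1]. c a) = 1"
  shows "finite_dual N q (diag_char c)"
  unfolding finite_dual_def
proof (intro conjI exI[of _ "[diag_char c]"] allI impI)
  show "resp_SL N q (diag_char c)"
    using assms by (rule resp_SL_diag_char)
  show "\<exists>cs. \<forall>w. valid N w \<longrightarrow> diag_char c (u @ w @ v) = (\<Sum>t<length [diag_char c]. cs t * ([diag_char c] ! t) w)"
    for u v :: word
    by (intro exI[of _ "\<lambda>_. diag_char c u * diag_char c v"]) (simp add: diag_char_append)
qed

lemma prod_list_inverse: "(\<Prod>x\<leftarrow>xs. inverse (f x)) = inverse (\<Prod>x\<leftarrow>xs. f x :: 'a::field)"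
  by (induction xs) (simp_all add: inverse_mult_distrib)

lemma prod_list_upt_remove:
  assumes "i \<in> {1..N}"
  shows "(\<Prod>j\<leftarrow>[1..<N+1]. f j) = f i * (\<Prod>j\<leftarrow>filter (\<lambda>j. j \<noteq> i) [1..<N+1]. (f j :: 'a::comm_monoid_mult))"
proof -
  have "(\<Prod>j\<leftarrow>[1..<N+1]. f j) = (\<Prod>j\<in>{1..N}. f j)"
    by (simp add: prod.distinct_set_conv_list[symmetric] atLeastLessThanSuc_atLeastAtMost del: upt_Suc)
  also have "\<dots> = f i * (\<Prod>j\<in>{1..N} - {i}. f j)"
    using assms by (intro prod.remove) auto
  also have "set (filter (\<lambda>j. j \<noteq> i) [1..<N+1]) = {1..N} - {i}"
    by (auto simp del: upt_Suc)
  then have "(\<Prod>j\<in>{1..N} - {i}. f j) = (\<Prod>j\<leftarrow>filter (\<lambda>j. j \<noteq> i) [1..<N+1]. f j)"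
    by (metis distinct_filter distinct_upt prod.distinct_set_conv_list)
  finally show ?thesis .
qed

section \<open>Functionals modulo the valid words\<close>

lemma eqH_refl [simp]: "eqH N f f"
  by (simp add: eqH_def)

lemma eqH_sym: "eqH N f g \<Longrightarrow> eqH N g f"
  by (simp add: eqH_def)

lemma eqH_trans [trans]: "eqH N f g \<Longrightarrow> eqH N g h \<Longrightarrow> eqH N f h"
  by (simp add: eqH_def)

lemma eqH_conv: "eqH N f f' \<Longrightarrow> eqH N g g' \<Longrightarrow> eqH N (conv N f g) (conv N f' g')"
  unfolding eqH_def by (auto intro: conv_cong)

lemma eqH_scale: "eqH N f g \<Longrightarrow> eqH N (\<lambda>w. c * f w) (\<lambda>w. c * g w)"
  by (simp add: eqH_def)

lemma valid_perm_graph: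
  "p permutes {1..N} \<Longrightarrow> valid N (map (\<lambda>a. (a, p a)) xs) \<longleftrightarrow> set xs \<subseteq> {1..N}"
  using permutes_in_image[of p "{1..N}"] by (auto simp: valid_def)

lemma resp_SL_cong:
  assumes "\<And>w. valid N w \<Longrightarrow> f w = g w"
  shows "resp_SL N q f = resp_SL N q g"
  using assms unfolding resp_SL_def
  by (simp add: valid_perm_graph atLeastLessThanSuc_atLeastAtMost cong: imp_cong del: upt_Suc)

lemma finite_dual_cong:
  assumes "\<And>w. valid N w \<Longrightarrow> f w = g w"
  shows "finite_dual N q f = finite_dual N q g"
  using assms resp_SL_cong[OF assms] unfolding finite_dual_def by (simp cong: imp_cong)

text \<open>Replacing a functional by its restriction to the valid words turns \<^const>\<open>eqH\<close> into
  equality, so that identities in \<open>H\<^sup>*\<close> can be used as rewrite rules.\<close>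

definition canon :: "nat \<Rightarrow> (word \<Rightarrow> 'k::field) \<Rightarrow> word \<Rightarrow> 'k" where
  "canon N f = (\<lambda>w. if valid N w then f w else 0)"

definition cmul :: "nat \<Rightarrow> (word \<Rightarrow> 'k::field) \<Rightarrow> (word \<Rightarrow> 'k) \<Rightarrow> word \<Rightarrow> 'k" where
  "cmul N f g = canon N (conv N f g)"

definition scale :: "'k::field \<Rightarrow> (word \<Rightarrow> 'k) \<Rightarrow> word \<Rightarrow> 'k" where
  "scale c f = (\<lambda>w. c * f w)"

definition fadd :: "(word \<Rightarrow> 'k::field) \<Rightarrow> (word \<Rightarrow> 'k) \<Rightarrow> word \<Rightarrow> 'k" where
  "fadd f g = (\<lambda>w. f w + g w)"

lemma eqH_iff_canon: "eqH N f g \<longleftrightarrow> canon N f = canon N g"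
  unfolding eqH_def canon_def by (auto simp: fun_eq_iff)

lemma canon_eqI: "(\<And>w. valid N w \<Longrightarrow> f w = g w) \<Longrightarrow> canon N f = canon N g"
  by (auto simp: canon_def)

lemma cmul_canon_left [simp]: "cmul N (canon N f) g = cmul N f g"
  unfolding cmul_def canon_def by (rule ext) (auto intro!: conv_cong)

lemma cmul_canon_right [simp]: "cmul N f (canon N g) = cmul N f g"
  unfolding cmul_def canon_def by (rule ext) (auto intro!: conv_cong)

lemma cmul_conv_left [simp]: "cmul N (conv N f g) h = cmul N (cmul N f g) h"
  unfolding cmul_def[of N f g] by (rule cmul_canon_left[symmetric])

lemma cmul_conv_right [simp]: "cmul N h (conv N f g) = cmul N h (cmul N f g)"
  unfolding cmul_def[of N f g] by (rule cmul_canon_right[symmetric])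

lemma cmul_assoc: "cmul N (cmul N f g) h = cmul N f (cmul N g h)"
  unfolding cmul_conv_left[symmetric] cmul_conv_right[symmetric] by (simp only: cmul_def conv_assoc)

lemma cmul_scale_left [simp]: "cmul N (scale c f) g = scale c (cmul N f g)"
  by (simp add: cmul_def canon_def scale_def conv_scale_left fun_eq_iff)

lemma cmul_scale_right [simp]: "cmul N f (scale c g) = scale c (cmul N f g)"
  by (simp add: cmul_def canon_def scale_def conv_scale_right fun_eq_iff)

lemma scale_one [simp]: "scale 1 f = f"
  by (simp add: scale_def)

lemma scale_scale [simp]: "scale c (scale d f) = scale (c * d) f"
  by (simp add: scale_def mult.assoc)

lemma cmul_fadd_left: "cmul N (fadd f g) h = fadd (cmul N f h) (cmul N g h)"
  by (simp add: cmul_def canon_def fadd_def conv_add_left fun_eq_iff)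

lemma cmul_fadd_right: "cmul N h (fadd f g) = fadd (cmul N h f) (cmul N h g)"
  by (simp add: cmul_def canon_def fadd_def conv_add_right fun_eq_iff)

lemma cmul_eps_left: "cmul N eps f = canon N f"
  by (simp add: cmul_def canon_def conv_eps_left fun_eq_iff)

lemma cmul_eps_right: "cmul N f eps = canon N f"
  by (simp add: cmul_def canon_def conv_eps_right fun_eq_iff)

lemma conv_eq_cmul: "valid N w \<Longrightarrow> conv N f g w = cmul N f g w"
  by (simp add: cmul_def canon_def)

lemma serre_eq_cmul:
  "valid N w \<Longrightarrow> serre N q X Y w =
    cmul N X (cmul N X Y) w - (q + inverse q) * cmul N X (cmul N Y X) w + cmul N Y (cmul N X X) w"
  by (simp add: serre_def conv_eq_cmul)

lemma eqH_serre: "eqH N X X' \<Longrightarrow> eqH N Y Y' \<Longrightarrow> eqH N (serre N q X Y) (serre N q X' Y')"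
  using eqH_conv[of N X X' "conv N X Y" "conv N X' Y'"] eqH_conv[of N X X' "conv N Y X" "conv N Y' X'"]
    eqH_conv[of N Y Y' "conv N X X" "conv N X' X'"] eqH_conv[of N X X' Y Y'] eqH_conv[of N Y Y' X X']
    eqH_conv[of N X X' X X']
  by (simp add: eqH_def serre_def)

lemma cmul_diag_char_diag_char: "cmul N (diag_char c) (diag_char d) = canon N (diag_char (\<lambda>i. c i * d i))"
  unfolding cmul_def by (rule canon_eqI) (rule conv_diag_char_diag_char)

lemma cmul_diag_char_commute:
  "cmul N (diag_char c) (cmul N (diag_char d) f) = cmul N (diag_char d) (cmul N (diag_char c) f)"
  unfolding cmul_assoc[symmetric] cmul_diag_char_diag_char by (simp only: mult.commute)

section \<open>The functionals \<open>l\<^sub>i\<^sub>j\<close>\<close>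

lemma sum_eq_single:
  assumes "finite S" "x \<in> S" "\<And>y. y \<in> S \<Longrightarrow> y \<noteq> x \<Longrightarrow> f y = 0"
  shows "sum f S = f x"
  using sum.mono_neutral_left[of S "{x}" f] assms by auto

lemma sig1_single: "fst a \<in> {1..N} \<Longrightarrow> sig1 N q z [b] a = sgen q z a b"
  by (simp, subst sum_eq_single[where x = "fst a"]) (auto simp: eps_def)

lemma lfun_Nil [simp]: "lfun N q z A B [] = (if A = B then 1 else 0)"
  by (simp add: lfun_def eps_def)

lemma lfun_Cons:
  "fst a \<in> {1..N} \<Longrightarrow> lfun N q z A B (a # w) = (\<Sum>k\<in>{1..N}. sgen q z a (A, k) * lfun N q z k B w)"
  unfolding lfun_def sigf.simps conv_Cons by (simp add: shift_def sig1_single del: sig1.simps)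

lemma lfun_Cons_diag:
  assumes "r \<in> {1..N}" "A \<in> {1..N}"
  shows "lfun N q z A B ((r, r) # w) = z * (if r = A then q else 1) * lfun N q z A B w"
proof -
  have "lfun N q z A B ((r, r) # w) = (\<Sum>k\<in>{1..N}. sgen q z (r, r) (A, k) * lfun N q z k B w)"
    using assms by (simp add: lfun_Cons)
  also have "\<dots> = sgen q z (r, r) (A, A) * lfun N q z A B w"
    using assms by (intro sum_eq_single) (simp_all add: sgen_def)
  finally show ?thesis
    by (cases "r = A") (simp_all add: sgen_def)
qed

lemma lfun_Cons_upper:
  assumes "r \<in> {1..N}" "r < c"
  shows "lfun N q z A B ((r, c) # w) = (if c = A then z * (q - inverse q) * lfun N q z r B w else 0)"
proof -
  have "lfun N q z A B ((r, c) # w) = (\<Sum>k\<in>{1..N}. sgen q z (r, c) (A, k) * lfun N q z k B w)"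
    using assms by (simp add: lfun_Cons)
  also have "\<dots> = sgen q z (r, c) (A, r) * lfun N q z r B w"
    using assms by (intro sum_eq_single) (simp_all add: sgen_def)
  finally show ?thesis
    using assms by (cases "c = A") (simp_all add: sgen_def)
qed

lemma lfun_Cons_lower:
  assumes "r \<in> {1..N}" "c < r"
  shows "lfun N q z A B ((r, c) # w) = 0"
  using assms by (simp add: lfun_Cons sgen_def)

lemma lfun_above_diag: "valid N w \<Longrightarrow> A < B \<Longrightarrow> A \<in> {1..N} \<Longrightarrow> lfun N q z A B w = 0"
proof (induction w arbitrary: A)
  case (Cons a w)
  obtain r c where a: "a = (r, c)"
    by fastforce
  consider "r = c" | "r < c" | "c < r"
    by linarith
  then show ?case
    using Cons a by cases (simp_all add: lfun_Cons_diag lfun_Cons_upper lfun_Cons_lower)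
qed simp

definition K_weight :: "'k::field \<Rightarrow> 'k \<Rightarrow> nat \<Rightarrow> nat \<Rightarrow> 'k" where
  "K_weight q z A = (\<lambda>r. z * (if r = A then q else 1))"

lemma lfun_diag: "valid N w \<Longrightarrow> A \<in> {1..N} \<Longrightarrow> lfun N q z A A w = diag_char (K_weight q z A) w"
proof (induction w)
  case (Cons a w)
  obtain r c where a: "a = (r, c)"
    by fastforce
  consider "r = c" | "r < c" | "c < r"
    by linarith
  then show ?case
    using Cons a by cases
      (simp_all add: lfun_Cons_diag lfun_Cons_upper lfun_Cons_lower lfun_above_diag diag_char_Cons K_weight_def)
qed simp

lemma shift_lfun_diag:
  "r \<in> {1..N} \<Longrightarrow> A \<in> {1..N} \<Longrightarrow> shift (r, r) (lfun N q z A B) = (\<lambda>v. z * (if r = A then q else 1) * lfun N q z A B v)"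
  by (simp add: shift_def lfun_Cons_diag)

lemma shift_lfun_upper:
  "r \<in> {1..N} \<Longrightarrow> r < c \<Longrightarrow>
    shift (r, c) (lfun N q z A B) = (if c = A then (\<lambda>v. z * (q - inverse q) * lfun N q z r B v) else (\<lambda>v. 0))"
  by (auto simp: shift_def lfun_Cons_upper)

lemma shift_lfun_lower: "r \<in> {1..N} \<Longrightarrow> c < r \<Longrightarrow> shift (r, c) (lfun N q z A B) = (\<lambda>v. 0)"
  by (simp add: shift_def lfun_Cons_lower)

lemma conv_lfun_Cons_diag:
  assumes "r \<in> {1..N}" "A \<in> {1..N}" "C \<in> {1..N}"
  shows "conv N (lfun N q z A B) (lfun N q z C D) ((r, r) # w) =
    z * (if r = A then q else 1) * (z * (if r = C then q else 1)) * conv N (lfun N q z A B) (lfun N q z C D) w"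
proof -
  have "conv N (lfun N q z A B) (lfun N q z C D) ((r, r) # w) =
      conv N (shift (r, r) (lfun N q z A B)) (shift (r, r) (lfun N q z C D)) w"
    unfolding conv_Cons fst_conv snd_conv
  proof (rule sum_eq_single)
    fix k
    assume "k \<in> {1..N}" "k \<noteq> r"
    then show "conv N (shift (r, k) (lfun N q z A B)) (shift (k, r) (lfun N q z C D)) w = 0"
      using assms by (cases "k < r") (simp_all add: shift_lfun_lower)
  qed (use assms in simp_all)
  then show ?thesis
    using assms by (simp add: shift_lfun_diag conv_scale_left conv_scale_right)
qed

lemma conv_lfun_Cons_lower:
  assumes "r \<in> {1..N}" "c < r"
  shows "conv N (lfun N q z A B) (lfun N q z C D) ((r, c) # w) = 0"
  unfolding conv_Cons fst_conv snd_conv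
proof (rule sum.neutral, rule ballI)
  fix k
  assume "k \<in> {1..N}"
  then show "conv N (shift (r, k) (lfun N q z A B)) (shift (k, c) (lfun N q z C D)) w = 0"
    using assms by (cases "k < r") (simp_all add: shift_lfun_lower)
qed

text \<open>A letter \<open>x\<^sub>r\<^sub>c\<close> with \<open>r < c\<close> passes to the left factor as \<open>x\<^sub>r\<^sub>r\<close>, \<open>x\<^sub>r\<^sub>c\<close> or
  \<open>x\<^sub>r\<^sub>k\<close>, and correspondingly to the right factor as \<open>x\<^sub>r\<^sub>c\<close>, \<open>x\<^sub>c\<^sub>c\<close> or \<open>x\<^sub>k\<^sub>c\<close> with
  \<open>r < k < c\<close>; these give the three summands.\<close>

lemma conv_lfun_Cons_upper:
  assumes "r \<in> {1..N}" "c \<in> {1..N}" "r < c" "A \<in> {1..N}" "C \<in> {1..N}"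
  shows "conv N (lfun N q z A B) (lfun N q z C D) ((r, c) # w) =
     (if c = C then z * (if r = A then q else 1) * (z * (q - inverse q)) * conv N (lfun N q z A B) (lfun N q z r D) w else 0)
   + (if c = A then z * (q - inverse q) * (z * (if c = C then q else 1)) * conv N (lfun N q z r B) (lfun N q z C D) w else 0)
   + (if r < A \<and> A < c \<and> c = C then z * (q - inverse q) * (z * (q - inverse q)) * conv N (lfun N q z r B) (lfun N q z A D) w else 0)"
  (is "_ = ?X1 + ?X2 + ?X3")
proof -
  let ?f = "\<lambda>k. conv N (shift (r, k) (lfun N q z A B)) (shift (k, c) (lfun N q z C D)) w"
  have "?f k = (if k = r then ?X1 else 0) + (if k = c then ?X2 else 0) + (if k = A then ?X3 else 0)"
    if "k \<in> {1..N}" for k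
  proof -
    consider "k = r" | "k = c" | "k < r" | "c < k" | "r < k" "k < c"
      using assms by linarith
    then show ?thesis
    proof cases
      case 1
      then show ?thesis
        using assms by (cases "c = C") (simp_all add: shift_lfun_diag shift_lfun_upper conv_scale_left conv_scale_right)
    next
      case 2
      then show ?thesis
        using assms by (cases "c = A") (simp_all add: shift_lfun_diag shift_lfun_upper conv_scale_left conv_scale_right)
    next
      case 5
      then show ?thesis
        using assms that by (cases "k = A"; cases "c = C") (simp_all add: shift_lfun_upper conv_scale_left conv_scale_right)
    qed (use assms that in \<open>simp_all add: shift_lfun_lower\<close>)
  qed
  then have "conv N (lfun N q z A B) (lfun N q z C D) ((r, c) # w) =
      (\<Sum>k\<in>{1..N}. (if k = r then ?X1 else 0) + (if k = c then ?X2 else 0) + (if k = A then ?X3 else 0))"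
    by (simp add: conv_Cons)
  then show ?thesis
    using assms by (simp add: sum.distrib)
qed

lemma conv_lfun_diag_char_exchange:
  assumes "valid N w" "A \<in> {1..N}" "B \<in> {1..N}"
  shows "c B * conv N (lfun N q z A B) (diag_char c) w = c A * conv N (diag_char c) (lfun N q z A B) w"
  using assms
proof (induction w arbitrary: A)
  case (Cons x w)
  obtain r s where x: "x = (r, s)" and rs: "r \<in> {1..N}" "s \<in> {1..N}" "valid N w"
    using Cons.prems by (cases x) auto
  consider "r = s" | "r < s" | "s < r"
    by linarith
  then show ?case
  proof cases
    case 1
    then show ?thesis
      using Cons.IH[of A] Cons.prems rs unfolding x
      by (simp add: conv_diag_char_left_Cons conv_diag_char_right_Cons shift_lfun_diag conv_scale_left
          conv_scale_right mult.left_commute)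
  next
    case 2
    then show ?thesis
      using Cons.IH[of r] Cons.prems rs unfolding x
      by (simp add: conv_diag_char_left_Cons conv_diag_char_right_Cons shift_lfun_upper conv_scale_left
          conv_scale_right mult.left_commute)
  next
    case 3
    then show ?thesis
      using rs unfolding x by (simp add: conv_diag_char_left_Cons conv_diag_char_right_Cons shift_lfun_lower)
  qed
qed simp

section \<open>Mirror symmetry\<close>

definition mirror :: "nat \<Rightarrow> nat \<Rightarrow> nat" where
  "mirror N i = Suc N - i"

definition mirror_word :: "nat \<Rightarrow> word \<Rightarrow> word" where
  "mirror_word N w = rev (map (\<lambda>a. (mirror N (fst a), mirror N (snd a))) w)"

definition mirror_fun :: "nat \<Rightarrow> (word \<Rightarrow> 'k) \<Rightarrow> word \<Rightarrow> 'k" where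
  "mirror_fun N f = (\<lambda>w. f (mirror_word N w))"

lemma mirror_in_range: "i \<in> {1..N} \<Longrightarrow> mirror N i \<in> {1..N}"
  by (auto simp: mirror_def)

lemma mirror_mirror: "i \<in> {1..N} \<Longrightarrow> mirror N (mirror N i) = i"
  by (auto simp: mirror_def)

lemma mirror_eq_iff: "i \<in> {1..N} \<Longrightarrow> j \<in> {1..N} \<Longrightarrow> mirror N i = mirror N j \<longleftrightarrow> i = j"
  by (auto simp: mirror_def)

lemma bij_betw_mirror: "bij_betw (mirror N) {1..N} {1..N}"
  by (rule bij_betw_byWitness[where f' = "mirror N"]) (auto simp: mirror_def)

lemma mirror_word_Nil [simp]: "mirror_word N [] = []"
  by (simp add: mirror_word_def)

lemma mirror_word_Cons: "mirror_word N (a # w) = mirror_word N w @ [(mirror N (fst a), mirror N (snd a))]"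
  by (simp add: mirror_word_def)

lemma valid_mirror_word: "valid N w \<Longrightarrow> valid N (mirror_word N w)"
  by (induction w) (auto simp: mirror_word_Cons mirror_def)

lemma mirror_word_mirror_word: "valid N w \<Longrightarrow> mirror_word N (mirror_word N w) = w"
  by (induction w) (auto simp: mirror_word_def rev_map mirror_mirror)

lemma conv_mirror_word:
  "valid N w \<Longrightarrow> conv N f g (mirror_word N w) = conv N (mirror_fun N f) (mirror_fun N g) w"
proof (induction w arbitrary: f g)
  case (Cons a w)
  let ?m = "mirror N"
  have "conv N f g (mirror_word N (a # w)) = (\<Sum>k\<in>{1..N}.
      conv N (\<lambda>v. f (mirror_word N v @ [(?m (fst a), k)])) (\<lambda>v. g (mirror_word N v @ [(k, ?m (snd a))])) w)"
    using Cons by (simp add: mirror_word_Cons conv_snoc mirror_fun_def)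
  also have "\<dots> = (\<Sum>k\<in>{1..N}.
      conv N (\<lambda>v. f (mirror_word N v @ [(?m (fst a), ?m k)])) (\<lambda>v. g (mirror_word N v @ [(?m k, ?m (snd a))])) w)"
    by (rule sum.reindex_bij_betw[OF bij_betw_mirror, symmetric])
  also have "\<dots> = conv N (mirror_fun N f) (mirror_fun N g) (a # w)"
    by (simp add: conv_Cons shift_def mirror_word_Cons mirror_fun_def)
  finally show ?case .
qed (simp add: mirror_fun_def)

lemma diag_char_mirror_word: "valid N w \<Longrightarrow> diag_char c (mirror_word N w) = diag_char (\<lambda>i. c (mirror N i)) w"
  by (induction w) (auto simp: mirror_word_Cons diag_char_append diag_char_Cons mirror_eq_iff)

lemma sgen_mirror:
  assumes "k \<in> {1..N}" "j \<in> {1..N}" "r \<in> {1..N}" "c \<in> {1..N}"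
  shows "sgen q z (k, j) (r, c) = sgen q z (mirror N r, mirror N c) (mirror N k, mirror N j)"
proof -
  have "mirror N r = mirror N k \<longleftrightarrow> k = r" "mirror N k > mirror N r \<longleftrightarrow> r > k"
    "mirror N c = mirror N r \<and> mirror N j = mirror N k \<longleftrightarrow> j = k \<and> c = r"
    "mirror N c = mirror N k \<and> mirror N j = mirror N r \<longleftrightarrow> j = r \<and> c = k"
    using assms by (auto simp: mirror_def)
  then show ?thesis
    unfolding sgen_def prod.case by simp
qed

lemma lfun_snoc:
  assumes "valid N (w @ [x])" "A \<in> {1..N}" "B \<in> {1..N}"
  shows "lfun N q z A B (w @ [x]) = (\<Sum>k\<in>{1..N}. lfun N q z A k w * sgen q z x (k, B))"
  using assms
proof (induction w arbitrary: A)
  case Nil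
  have "lfun N q z A B [x] = sgen q z x (A, B)"
    using Nil by (simp add: lfun_Cons sum_eq_single[where x = B])
  also have "\<dots> = (\<Sum>k\<in>{1..N}. lfun N q z A k [] * sgen q z x (k, B))"
    using Nil by (simp add: sum_eq_single[where x = A])
  finally show ?case
    by simp
next
  case (Cons a w)
  have "lfun N q z A B ((a # w) @ [x]) =
      (\<Sum>k\<in>{1..N}. sgen q z a (A, k) * (\<Sum>k'\<in>{1..N}. lfun N q z k k' w * sgen q z x (k', B)))"
    using Cons by (simp add: lfun_Cons)
  also have "\<dots> = (\<Sum>k'\<in>{1..N}. (\<Sum>k\<in>{1..N}. sgen q z a (A, k) * lfun N q z k k' w) * sgen q z x (k', B))"
    by (simp add: sum_distrib_left sum_distrib_right mult.assoc) (rule sum.swap)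
  also have "\<dots> = (\<Sum>k'\<in>{1..N}. lfun N q z A k' (a # w) * sgen q z x (k', B))"
    using Cons.prems by (simp add: lfun_Cons)
  finally show ?case .
qed

lemma sig1_eq_lfun_mirror:
  assumes "valid N w" "i \<in> {1..N}" "j \<in> {1..N}"
  shows "sig1 N q z w (i, j) = lfun N q z (mirror N i) (mirror N j) (mirror_word N w)"
  using assms
proof (induction w arbitrary: j)
  case (Cons b w)
  let ?m = "mirror N"
  have "sig1 N q z (b # w) (i, j) = (\<Sum>k\<in>{1..N}. sgen q z (k, j) b * sig1 N q z w (i, k))"
    by simp
  also have "\<dots> =
      (\<Sum>k\<in>{1..N}. lfun N q z (?m i) (?m k) (mirror_word N w) * sgen q z (?m (fst b), ?m (snd b)) (?m k, ?m j))"
    using Cons by (intro sum.cong refl) (simp add: sgen_mirror[of _ N j "fst b" "snd b", simplified] mult.commute)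
  also have "\<dots> = (\<Sum>k\<in>{1..N}. lfun N q z (?m i) k (mirror_word N w) * sgen q z (?m (fst b), ?m (snd b)) (k, ?m j))"
    by (rule sum.reindex_bij_betw[OF bij_betw_mirror])
  also have "\<dots> = lfun N q z (?m i) (?m j) (mirror_word N w @ [(?m (fst b), ?m (snd b))])"
    using Cons.prems valid_mirror_word mirror_in_range by (intro lfun_snoc[symmetric]) auto
  finally show ?case
    by (simp add: mirror_word_Cons)
qed (simp add: eps_def mirror_eq_iff)

lemma rfun_eq_lfun_mirror:
  "valid N w \<Longrightarrow> i \<in> {1..N} \<Longrightarrow> j \<in> {1..N} \<Longrightarrow>
    rfun N q z i j w = lfun N q z (mirror N i) (mirror N j) (mirror_word N w)"
  by (simp add: rfun_def conv_eps_right sig1_eq_lfun_mirror del: sig1.simps)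

lemma eqH_mirror_fun: "eqH N f g \<Longrightarrow> eqH N (mirror_fun N f) (mirror_fun N g)"
  by (simp add: eqH_def mirror_fun_def valid_mirror_word)

lemma eqH_mirror_fun_mirror_fun: "eqH N (mirror_fun N (mirror_fun N f)) f"
  by (simp add: eqH_def mirror_fun_def mirror_word_mirror_word)

lemma eqH_mirror_fun_iff: "eqH N (mirror_fun N f) (mirror_fun N g) \<longleftrightarrow> eqH N f g"
  by (meson eqH_mirror_fun eqH_mirror_fun_mirror_fun eqH_sym eqH_trans)

lemma eqH_mirror_fun_conv: "eqH N (mirror_fun N (conv N f g)) (conv N (mirror_fun N f) (mirror_fun N g))"
  by (simp add: eqH_def mirror_fun_def conv_mirror_word)

lemma mirror_fun_scale: "mirror_fun N (\<lambda>w. c * f w) = (\<lambda>w. c * mirror_fun N f w)"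
  by (simp add: mirror_fun_def)

lemma eqH_mirror_fun_diag_char: "eqH N (mirror_fun N (diag_char c)) (diag_char (\<lambda>i. c (mirror N i)))"
  by (simp add: eqH_def mirror_fun_def diag_char_mirror_word)

lemma eqH_mirror_fun_conv_conv:
  "eqH N (mirror_fun N (conv N f (conv N g h))) (conv N (mirror_fun N f) (conv N (mirror_fun N g) (mirror_fun N h)))"
  by (rule eqH_trans[OF eqH_mirror_fun_conv]) (intro eqH_conv eqH_refl eqH_mirror_fun_conv)

lemma eqH_mirror_fun_serre: "eqH N (mirror_fun N (serre N q X Y)) (serre N q (mirror_fun N X) (mirror_fun N Y))"
  using eqH_mirror_fun_conv_conv[of N X X Y] eqH_mirror_fun_conv_conv[of N X Y X]
    eqH_mirror_fun_conv_conv[of N Y X X]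
  by (simp add: eqH_def serre_def mirror_fun_def)

lemma serre_scale: "serre N q (\<lambda>w. c * X w) (\<lambda>w. c * Y w) = (\<lambda>w. c^3 * serre N q X Y w)"
  by (simp add: serre_def conv_scale_left conv_scale_right fun_eq_iff algebra_simps power3_eq_cube)

section \<open>The functionals \<open>\<sigma>(-, g)\<close> as products of the \<open>l\<^sub>i\<^sub>j\<close>\<close>

primrec lprod :: "nat \<Rightarrow> 'k::field \<Rightarrow> 'k \<Rightarrow> word \<Rightarrow> word \<Rightarrow> 'k" where
  "lprod N q z [] = eps"
| "lprod N q z (b # g) = conv N (lprod N q z g) (lfun N q z (fst b) (snd b))"

text \<open>\<^const>\<open>sigf\<close> recurses on its first argument; \<^const>\<open>lprod\<close> computes the same
  functional by recursion on the second one, as the product \<open>l\<^bsub>b\<^sub>n\<^esub> \<cdots> l\<^bsub>b\<^sub>1\<^esub>\<close>.\<close>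

lemma lprod_Nil_word: "lprod N q z g [] = eps g"
  by (induction g) (auto simp: eps_def)

lemma lprod_Cons_word:
  assumes "fst a \<in> {1..N}" "valid N g"
  shows "lprod N q z g (a # w) =
    (\<Sum>ks\<in>index_lists N (length g). sig1 N q z (zip (map fst g) ks) a * lprod N q z (zip ks (map snd g)) w)"
  using assms
proof (induction g arbitrary: a w)
  case Nil
  show ?case
    by (simp add: index_lists_0 eps_eq_diag_char diag_char_Cons)
next
  case (Cons b g)
  let ?G1 = "map fst g" and ?G2 = "map snd g"
  let ?T = "\<lambda>k ks k'. sig1 N q z (zip ?G1 ks) (fst a, k) * sgen q z (k, snd a) (fst b, k')
    * conv N (lprod N q z (zip ks ?G2)) (lfun N q z k' (snd b)) w"
  have b: "fst b \<in> {1..N}" "snd b \<in> {1..N}" "valid N g"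
    using Cons.prems by auto
  have shift_lprod: "shift (fst a, k) (lprod N q z g) =
      (\<lambda>v. \<Sum>ks\<in>index_lists N (length g). sig1 N q z (zip ?G1 ks) (fst a, k) * lprod N q z (zip ks ?G2) v)" for k
    using Cons.IH[of "(fst a, k)"] Cons.prems b by (auto simp: shift_def)
  have shift_lfun: "shift (k, snd a) (lfun N q z (fst b) (snd b)) =
      (\<lambda>v. \<Sum>k'\<in>{1..N}. sgen q z (k, snd a) (fst b, k') * lfun N q z k' (snd b) v)" if "k \<in> {1..N}" for k
    using that by (auto simp: shift_def lfun_Cons)
  have "lprod N q z (b # g) (a # w) = (\<Sum>k\<in>{1..N}. \<Sum>ks\<in>index_lists N (length g). \<Sum>k'\<in>{1..N}. ?T k ks k')"
    by (auto simp: conv_Cons shift_lprod shift_lfun conv_sum_left conv_sum_right conv_scale_left conv_scale_right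
        sum_distrib_left mult.assoc intro!: sum.cong)
  also have "\<dots> = (\<Sum>k'\<in>{1..N}. \<Sum>ks\<in>index_lists N (length g). \<Sum>k\<in>{1..N}. ?T k ks k')"
    by (subst sum.swap) (subst (2) sum.swap, subst sum.swap, rule refl)
  also have "\<dots> = (\<Sum>(k', ks)\<in>{1..N} \<times> index_lists N (length g).
      sig1 N q z ((fst b, k') # zip ?G1 ks) a * lprod N q z ((k', snd b) # zip ks ?G2) w)"
    by (subst sum.cartesian_product[symmetric]) (intro sum.cong refl, simp add: sum_distrib_left mult_ac)
  also have "\<dots> = (\<Sum>ks\<in>index_lists N (length (b # g)).
      sig1 N q z (zip (map fst (b # g)) ks) a * lprod N q z (zip ks (map snd (b # g))) w)"
  proof -
    have inj: "inj_on (\<lambda>(k, ks). k # ks) ({1..N} \<times> index_lists N (length g))"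
      by (auto simp: inj_on_def)
    show ?thesis
      by (simp only: length_Cons index_lists_Suc sum.reindex[OF inj]) (simp add: case_prod_beta)
  qed
  finally show ?case .
qed

lemma sigf_eq_lprod: "valid N w \<Longrightarrow> valid N g \<Longrightarrow> sigf N q z w g = lprod N q z g w"
proof (induction w arbitrary: g)
  case (Cons a w)
  have "sigf N q z (a # w) g =
      (\<Sum>ks\<in>index_lists N (length g). sig1 N q z (zip (map fst g) ks) a * sigf N q z w (zip ks (map snd g)))"
    by (simp add: conv_index_lists del: sig1.simps)
  also have "\<dots> = lprod N q z g (a # w)"
    using Cons valid_zip_index_lists by (simp add: lprod_Cons_word del: sig1.simps)
  finally show ?case .
qed (simp add: lprod_Nil_word)

lemma lprod_append: "valid N w \<Longrightarrow> lprod N q z (g @ h) w = conv N (lprod N q z h) (lprod N q z g) w"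
proof (induction g arbitrary: w)
  case (Cons b g)
  have "lprod N q z ((b # g) @ h) w = conv N (conv N (lprod N q z h) (lprod N q z g)) (lfun N q z (fst b) (snd b)) w"
    using Cons by (simp, intro conv_cong) simp_all
  then show ?case
    by (simp add: conv_assoc)
qed (simp add: conv_eps_right)

lemma sigf_append: "valid N w \<Longrightarrow> sigf N q z (g @ h) w = conv N (sigf N q z g) (sigf N q z h) w"
proof (induction g arbitrary: w)
  case (Cons a g)
  have "sigf N q z ((a # g) @ h) w = conv N (\<lambda>v. sig1 N q z v a) (conv N (sigf N q z g) (sigf N q z h)) w"
    using Cons by (simp del: sig1.simps, intro conv_cong) simp_all
  then show ?case
    by (simp add: conv_assoc del: sig1.simps)
qed (simp add: conv_eps_left)

lemma sigf_append_second:
  assumes "valid N w" "valid N g" "valid N h"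
  shows "sigf N q z w (h @ g) = conv N (\<lambda>v. sigf N q z v g) (\<lambda>v. sigf N q z v h) w"
proof -
  have "conv N (\<lambda>v. sigf N q z v g) (\<lambda>v. sigf N q z v h) w = conv N (lprod N q z g) (lprod N q z h) w"
    using assms by (intro conv_cong) (simp_all add: sigf_eq_lprod)
  then show ?thesis
    using assms by (simp add: sigf_eq_lprod lprod_append)
qed

lemma lprod_diag:
  assumes "\<forall>b\<in>set g. fst b = snd b \<and> fst b \<in> {1..N}"
  shows "eqH N (lprod N q z g) (diag_char (\<lambda>r. \<Prod>b\<leftarrow>g. K_weight q z (fst b) r))"
  using assms
proof (induction g)
  case (Cons b g)
  have "eqH N (lprod N q z (b # g)) (conv N (diag_char (\<lambda>r. \<Prod>b\<leftarrow>g. K_weight q z (fst b) r)) (diag_char (K_weight q z (fst b))))"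
    using Cons by (simp, intro eqH_conv) (auto simp: eqH_def lfun_diag)
  then show ?case
    by (simp add: eqH_def conv_diag_char_diag_char mult.commute)
qed (simp add: eps_eq_diag_char)

definition diag_word_except :: "nat \<Rightarrow> nat \<Rightarrow> word" where
  "diag_word_except N i = map (\<lambda>j. (j, j)) (filter (\<lambda>j. j \<noteq> i) [1..<N+1])"

lemma valid_diag_word_except: "valid N (diag_word_except N i)"
  by (auto simp: diag_word_except_def valid_def)

section \<open>Subalgebras of \<open>H\<^sup>*\<close> spanned by a family of functionals\<close>

definition lin_comb :: "(word \<Rightarrow> word \<Rightarrow> 'k::field) \<Rightarrow> ('k \<times> word) list \<Rightarrow> word \<Rightarrow> 'k" where
  "lin_comb \<Phi> xs = (\<lambda>w. \<Sum>(c, g)\<leftarrow>xs. c * \<Phi> g w)"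

lemma conv_lin_comb:
  assumes "valid N w" "\<And>g h. g \<in> snd ` set xs \<Longrightarrow> h \<in> snd ` set ys \<Longrightarrow> eqH N (conv N (\<Phi> g) (\<Phi> h)) (\<Phi> (m g h))"
  shows "conv N (lin_comb \<Phi> xs) (lin_comb \<Phi> ys) w = lin_comb \<Phi> [(c * d, m g h). (c, g) \<leftarrow> xs, (d, h) \<leftarrow> ys] w"
proof -
  have "conv N (lin_comb \<Phi> xs) (lin_comb \<Phi> ys) w = (\<Sum>(c, g)\<leftarrow>xs. c * (\<Sum>(d, h)\<leftarrow>ys. d * conv N (\<Phi> g) (\<Phi> h) w))"
    by (simp add: lin_comb_def conv_sum_list_left conv_sum_list_right)
  also have "\<dots> = (\<Sum>(c, g)\<leftarrow>xs. c * (\<Sum>(d, h)\<leftarrow>ys. d * \<Phi> (m g h) w))"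
  proof (intro arg_cong[where f = sum_list] map_cong refl)
    fix x
    assume x: "x \<in> set xs"
    obtain c g where cg: "x = (c, g)"
      by fastforce
    have "d * conv N (\<Phi> g) (\<Phi> h) w = d * \<Phi> (m g h) w" if "(d, h) \<in> set ys" for d h
      using assms x that unfolding cg eqH_def by (metis image_eqI snd_conv)
    then show "(case x of (c, g) \<Rightarrow> c * (\<Sum>(d, h)\<leftarrow>ys. d * conv N (\<Phi> g) (\<Phi> h) w))
        = (case x of (c, g) \<Rightarrow> c * (\<Sum>(d, h)\<leftarrow>ys. d * \<Phi> (m g h) w))"
      unfolding cg prod.case
      by (intro arg_cong[where f = "\<lambda>l. c * sum_list l"] map_cong refl) (auto split: prod.splits)
  qed
  also have "\<dots> = lin_comb \<Phi> [(c * d, m g h). (c, g) \<leftarrow> xs, (d, h) \<leftarrow> ys] w"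
    by (induction xs) (auto simp: lin_comb_def sum_list_const_mult case_prod_beta o_def sum_distrib_left mult.assoc)
  finally show ?thesis .
qed

lemma lin_comb_append: "lin_comb \<Phi> (xs @ ys) = (\<lambda>w. lin_comb \<Phi> xs w + lin_comb \<Phi> ys w)"
  by (simp add: lin_comb_def)

lemma lin_comb_scale: "lin_comb \<Phi> (map (\<lambda>(d, g). (c * d, g)) xs) w = c * lin_comb \<Phi> xs w"
  by (induction xs) (auto simp: lin_comb_def algebra_simps)

lemma zero_in_alg_gen: "(\<lambda>w. 0) \<in> alg_gen N S"
  using alg_gen.smult[OF alg_gen.unit, of 0 N S] by simp

lemma lin_comb_in_alg_gen:
  assumes "\<And>g. valid N g \<Longrightarrow> \<exists>G\<in>alg_gen N S. eqH N (\<Phi> g) G"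
  shows "\<forall>(c, g)\<in>set xs. valid N g \<Longrightarrow> \<exists>G\<in>alg_gen N S. eqH N (lin_comb \<Phi> xs) G"
proof (induction xs)
  case Nil
  show ?case
    using zero_in_alg_gen by (force simp: lin_comb_def eqH_def)
next
  case (Cons x xs)
  obtain c g where x: "x = (c, g)"
    by fastforce
  obtain G1 where "G1 \<in> alg_gen N S" "eqH N (\<Phi> g) G1"
    using assms Cons.prems x by auto
  moreover obtain G2 where "G2 \<in> alg_gen N S" "eqH N (lin_comb \<Phi> xs) G2"
    using Cons by auto
  ultimately show ?case
    by (intro bexI[of _ "\<lambda>w. c * G1 w + G2 w"] alg_gen.add alg_gen.smult) (auto simp: x lin_comb_def eqH_def)
qed

lemma alg_gen_in_lin_span:
  assumes gen: "\<And>s. s \<in> S \<Longrightarrow> \<exists>c g. valid N g \<and> eqH N s (\<lambda>w. c * \<Phi> g w)"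
    and closed: "\<And>g h. valid N g \<Longrightarrow> valid N h \<Longrightarrow> valid N (m g h) \<and> eqH N (conv N (\<Phi> g) (\<Phi> h)) (\<Phi> (m g h))"
    and unit: "valid N g\<^sub>0" "eqH N eps (\<Phi> g\<^sub>0)"
  shows "G \<in> alg_gen N S \<Longrightarrow> \<exists>xs. (\<forall>(c, g)\<in>set xs. valid N g) \<and> eqH N G (lin_comb \<Phi> xs)"
proof (induction rule: alg_gen.induct)
  case (gen f)
  then obtain c g where "valid N g" "eqH N f (\<lambda>w. c * \<Phi> g w)"
    using assms(1) by blast
  then show ?case
    by (intro exI[of _ "[(c, g)]"]) (simp add: lin_comb_def eqH_def)
next
  case unit
  then show ?case
    using assms(3,4) by (intro exI[of _ "[(1, g\<^sub>0)]"]) (simp add: lin_comb_def eqH_def)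
next
  case (add f g)
  then obtain xs ys where "\<forall>(c, g)\<in>set xs. valid N g" "eqH N f (lin_comb \<Phi> xs)"
    "\<forall>(c, g)\<in>set ys. valid N g" "eqH N g (lin_comb \<Phi> ys)"
    by blast
  then show ?case
    by (intro exI[of _ "xs @ ys"]) (auto simp: lin_comb_append eqH_def)
next
  case (smult f c)
  then obtain xs where "\<forall>(c, g)\<in>set xs. valid N g" "eqH N f (lin_comb \<Phi> xs)"
    by blast
  then show ?case
    by (intro exI[of _ "map (\<lambda>(d, g). (c * d, g)) xs"]) (auto simp: lin_comb_scale eqH_def)
next
  case (mult f f')
  then obtain xs ys where xs: "\<forall>(c, g)\<in>set xs. valid N g" "eqH N f (lin_comb \<Phi> xs)"
    and ys: "\<forall>(c, g)\<in>set ys. valid N g" "eqH N f' (lin_comb \<Phi> ys)"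
    by blast
  define zs where "zs = [(c * d, m g h). (c, g) \<leftarrow> xs, (d, h) \<leftarrow> ys]"
  have valid_xs: "valid N g" if "g \<in> snd ` set xs" for g
    using xs(1) that by auto
  have valid_ys: "valid N h" if "h \<in> snd ` set ys" for h
    using ys(1) that by auto
  have "eqH N (conv N (\<Phi> g) (\<Phi> h)) (\<Phi> (m g h))" if "g \<in> snd ` set xs" "h \<in> snd ` set ys" for g h
    using closed[OF valid_xs[OF that(1)] valid_ys[OF that(2)]] ..
  then have "conv N (lin_comb \<Phi> xs) (lin_comb \<Phi> ys) w = lin_comb \<Phi> zs w" if "valid N w" for w
    unfolding zs_def by (rule conv_lin_comb[OF that])
  then have "eqH N (conv N f f') (lin_comb \<Phi> zs)"
    using eqH_conv[OF xs(2) ys(2)] by (simp add: eqH_def)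
  moreover have "\<forall>(c, g)\<in>set zs. valid N g"
    using closed valid_xs valid_ys by (fastforce simp: zs_def)
  ultimately show ?case
    by blast
qed

lemma generated_byI:
  assumes A: "A = {lin_comb \<Phi> xs | xs. \<forall>(c, g)\<in>set xs. valid N g}"
    and in_alg_gen: "\<And>g. valid N g \<Longrightarrow> \<exists>G\<in>alg_gen N S. eqH N (\<Phi> g) G"
    and gen: "\<And>s. s \<in> S \<Longrightarrow> \<exists>c g. valid N g \<and> eqH N s (\<lambda>w. c * \<Phi> g w)"
    and mult: "\<And>g h. valid N g \<Longrightarrow> valid N h \<Longrightarrow> valid N (m g h) \<and> eqH N (conv N (\<Phi> g) (\<Phi> h)) (\<Phi> (m g h))"
    and unit: "valid N g\<^sub>0" "eqH N eps (\<Phi> g\<^sub>0)"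
  shows "generated_by N A S"
  unfolding generated_by_def A
proof (intro conjI ballI)
  fix h
  assume "h \<in> {lin_comb \<Phi> xs |xs. \<forall>(c, g)\<in>set xs. valid N g}"
  then show "\<exists>G\<in>alg_gen N S. eqH N h G"
    using lin_comb_in_alg_gen[where \<Phi> = \<Phi> and S = S, OF in_alg_gen] by blast
next
  fix G
  assume "G \<in> alg_gen N S"
  then obtain xs where "\<forall>(c, g)\<in>set xs. valid N g" "eqH N G (lin_comb \<Phi> xs)"
    using alg_gen_in_lin_span[where \<Phi> = \<Phi> and S = S, OF gen mult unit] by blast
  then show "\<exists>h\<in>{lin_comb \<Phi> xs |xs. \<forall>(c, g)\<in>set xs. valid N g}. eqH N G h"
    by blast
qed

lemma alg_gen_mirror:
  assumes "\<And>f. f \<in> S \<Longrightarrow> \<exists>G\<in>alg_gen N S'. eqH N (mirror_fun N f) G"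
  shows "G \<in> alg_gen N S \<Longrightarrow> \<exists>G'\<in>alg_gen N S'. eqH N (mirror_fun N G) G'"
proof (induction rule: alg_gen.induct)
  case (gen f)
  then show ?case
    by (rule assms)
next
  case unit
  show ?case
    using eqH_mirror_fun_diag_char[of N "\<lambda>_. 1"] by (intro bexI[of _ eps] alg_gen.unit) (simp add: eps_eq_diag_char)
next
  case (add f g)
  then obtain F G where "F \<in> alg_gen N S'" "eqH N (mirror_fun N f) F" "G \<in> alg_gen N S'" "eqH N (mirror_fun N g) G"
    by blast
  then show ?case
    by (intro bexI[of _ "\<lambda>w. F w + G w"] alg_gen.add) (simp_all add: eqH_def mirror_fun_def)
next
  case (smult f c)
  then obtain F where "F \<in> alg_gen N S'" "eqH N (mirror_fun N f) F"
    by blast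
  then show ?case
    by (intro bexI[of _ "\<lambda>w. c * F w"] alg_gen.smult) (simp_all add: eqH_def mirror_fun_def)
next
  case (mult f g)
  then obtain F G where "F \<in> alg_gen N S'" "eqH N (mirror_fun N f) F" "G \<in> alg_gen N S'" "eqH N (mirror_fun N g) G"
    by blast
  then have "eqH N (mirror_fun N (conv N f g)) (conv N F G)"
    using eqH_trans[OF eqH_mirror_fun_conv eqH_conv] by blast
  then show ?case
    using \<open>F \<in> alg_gen N S'\<close> \<open>G \<in> alg_gen N S'\<close> by (blast intro: alg_gen.mult)
qed

section \<open>Commutation relations between the \<open>l\<^sub>i\<^sub>j\<close>\<close>

locale SL =
  fixes N :: nat and q z :: "'k::field"
  assumes q_nonzero: "q \<noteq> 0" and q_square: "q ^ 2 \<noteq> 1" and N_ge_2: "N \<ge> 2"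
    and z_power: "z ^ N = inverse q"
begin

abbreviation L :: "nat \<Rightarrow> nat \<Rightarrow> word \<Rightarrow> 'k" where
  "L \<equiv> lfun N q z"

lemma z_nonzero: "z \<noteq> 0"
  using z_power q_nonzero N_ge_2 by (cases "z = 0") (auto simp: power_0_left)

lemma q_minus_inverse_nonzero: "q - inverse q \<noteq> 0"
  using q_nonzero q_square by (auto simp: field_simps power2_eq_square)

lemma K_weight_nonzero: "K_weight q z A r \<noteq> 0"
  using z_nonzero q_nonzero by (simp add: K_weight_def)

lemma conv_L_above_diag_left: "valid N w \<Longrightarrow> A < B \<Longrightarrow> A \<in> {1..N} \<Longrightarrow> conv N (L A B) g w = 0"
  using conv_cong[of N w "L A B" "\<lambda>v. 0" g g] by (simp add: lfun_above_diag)

lemma conv_L_above_diag_right: "valid N w \<Longrightarrow> A < B \<Longrightarrow> A \<in> {1..N} \<Longrightarrow> conv N g (L A B) w = 0"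
  using conv_cong[of N w g g "L A B" "\<lambda>v. 0"] by (simp add: lfun_above_diag)

lemma conv_L_diag_left: "valid N w \<Longrightarrow> A \<in> {1..N} \<Longrightarrow> conv N (L A A) g w = conv N (diag_char (K_weight q z A)) g w"
  by (rule conv_cong) (simp_all add: lfun_diag)

lemma conv_L_diag_right: "valid N w \<Longrightarrow> A \<in> {1..N} \<Longrightarrow> conv N g (L A A) w = conv N g (diag_char (K_weight q z A)) w"
  by (rule conv_cong) (simp_all add: lfun_diag)

lemma L_commute_diag:
  assumes "valid N w" "A \<in> {1..N}" "B \<in> {1..N}" "D \<in> {1..N}" "D \<noteq> A" "D \<noteq> B"
  shows "conv N (L A B) (L D D) w = conv N (L D D) (L A B) w"
proof -
  have "conv N (L A B) (diag_char (K_weight q z D)) w = conv N (diag_char (K_weight q z D)) (L A B) w"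
    using conv_lfun_diag_char_exchange[OF assms(1-3), of "K_weight q z D"] assms z_nonzero
    by (simp add: K_weight_def)
  then show ?thesis
    using assms by (simp add: conv_L_diag_left conv_L_diag_right)
qed

lemma L_diag_row:
  assumes "valid N w" "i \<in> {1..N}" "n \<in> {1..N}" "n \<noteq> i"
  shows "conv N (L i n) (L i i) w = q * conv N (L i i) (L i n) w"
proof -
  have "conv N (L i n) (diag_char (K_weight q z i)) w = q * conv N (diag_char (K_weight q z i)) (L i n) w"
    using conv_lfun_diag_char_exchange[OF assms(1-3), of "K_weight q z i"] assms z_nonzero
    by (simp add: K_weight_def)
  then show ?thesis
    using assms by (simp add: conv_L_diag_left conv_L_diag_right)
qed

lemma L_commute:
  assumes "valid N w" "1 \<le> r" "r < i" "i \<le> j" "j \<le> N"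
  shows "conv N (L r n) (L j i) w = conv N (L j i) (L r n) w"
  using assms
proof (induction w arbitrary: n r i j)
  case (Cons x w)
  obtain a c where x: "x = (a, c)" and ac: "a \<in> {1..N}" "c \<in> {1..N}" "valid N w"
    using Cons.prems by (cases x) auto
  have rng: "r \<in> {1..N}" "j \<in> {1..N}"
    using Cons.prems by auto
  consider "a = c" | "c < a" | "a < c"
    by linarith
  then show ?case
  proof cases
    case 1
    then show ?thesis
      using Cons.IH[of r i j n] Cons.prems ac rng unfolding x by (simp add: conv_lfun_Cons_diag mult_ac)
  next
    case 2
    then show ?thesis
      using ac unfolding x by (simp add: conv_lfun_Cons_lower)
  next
    case 3
    consider "c = j" "a < i" | "c = j" "i \<le> a" | "c = r" | "c \<noteq> r" "c \<noteq> j"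
      by linarith
    then show ?thesis
    proof cases
      case 1
      then show ?thesis
        using 3 Cons.prems ac rng unfolding x
        by (simp add: conv_lfun_Cons_upper conv_L_above_diag_left conv_L_above_diag_right)
    next
      case 2
      then show ?thesis
        using 3 Cons.prems Cons.IH[of r i a n] ac rng unfolding x
        by (simp add: conv_lfun_Cons_upper conv_L_above_diag_right)
    next
      case 4
      then show ?thesis
        using 3 Cons.prems ac rng unfolding x by (simp add: conv_lfun_Cons_upper)
    qed (use 3 Cons.prems Cons.IH[of a i j n] ac rng in \<open>simp add: conv_lfun_Cons_upper x\<close>)
  qed
qed simp

lemma L_cross:
  assumes "valid N w" "1 \<le> n" "n < i" "i < j" "j \<le> N"
  shows "conv N (L i n) (L j i) w = conv N (L j i) (L i n) w + (q - inverse q) * conv N (L j n) (L i i) w"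
  using assms
proof (induction w arbitrary: n i j)
  case (Cons x w)
  obtain a c where x: "x = (a, c)" and ac: "a \<in> {1..N}" "c \<in> {1..N}" "valid N w"
    using Cons.prems by (cases x) auto
  have rng: "n \<in> {1..N}" "i \<in> {1..N}" "j \<in> {1..N}"
    using Cons.prems by auto
  consider "a = c" | "c < a" | "a < c"
    by linarith
  then show ?case
  proof cases
    case 1
    have ih: "conv N (L i n) (L j i) w = conv N (L j i) (L i n) w + (q - inverse q) * conv N (L j n) (L i i) w"
      using Cons.IH[of n i j] Cons.prems ac by simp
    show ?thesis
      using 1 ac rng unfolding x by (simp add: ih conv_lfun_Cons_diag algebra_simps)
  next
    case 2
    then show ?thesis
      using ac unfolding x by (simp add: conv_lfun_Cons_lower)
  next
    case 3
    consider "c = i" | "c = j" "a < i" | "c = j" "a = i" | "c = j" "i < a" | "c \<noteq> i" "c \<noteq> j"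
      by linarith
    then show ?thesis
    proof cases
      case 1
      then show ?thesis
        using 3 Cons.prems L_commute[of w a i j n] ac rng unfolding x
        by (simp add: conv_lfun_Cons_upper conv_L_above_diag_right)
    next
      case 2
      then show ?thesis
        using 3 Cons.prems ac rng unfolding x
        by (simp add: conv_lfun_Cons_upper conv_L_above_diag_left conv_L_above_diag_right algebra_simps)
    next
      case 3
      then show ?thesis
        using \<open>a < c\<close> Cons.prems L_diag_row[of w i n] ac rng q_nonzero unfolding x
        by (simp add: conv_lfun_Cons_upper field_simps)
    next
      case 4
      have ih: "conv N (L i n) (L a i) w = conv N (L a i) (L i n) w + (q - inverse q) * conv N (L a n) (L i i) w"
        using 4 Cons.IH[of n i a] Cons.prems ac by simp
      show ?thesis
        using 3 4 Cons.prems ac rng unfolding x by (simp add: ih conv_lfun_Cons_upper algebra_simps)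
    next
      case 5
      then show ?thesis
        using 3 Cons.prems ac rng unfolding x by (simp add: conv_lfun_Cons_upper)
    qed
  qed
qed simp

lemma L_same_column:
  assumes "valid N w" "1 \<le> i" "i < j" "j \<le> N"
  shows "conv N (L i m) (L j m) w = q * conv N (L j m) (L i m) w"
  using assms
proof (induction w arbitrary: i j)
  case (Cons x w)
  obtain a c where x: "x = (a, c)" and ac: "a \<in> {1..N}" "c \<in> {1..N}" "valid N w"
    using Cons.prems by (cases x) auto
  have rng: "i \<in> {1..N}" "j \<in> {1..N}"
    using Cons.prems by auto
  consider "a = c" | "c < a" | "a < c"
    by linarith
  then show ?case
  proof cases
    case 1
    then show ?thesis
      using Cons.IH[of i j] Cons.prems ac rng unfolding x by (simp add: conv_lfun_Cons_diag mult_ac)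
  next
    case 2
    then show ?thesis
      using ac unfolding x by (simp add: conv_lfun_Cons_lower)
  next
    case 3
    consider "c = i" | "c = j" "a < i" | "c = j" "a = i" | "c = j" "i < a" | "c \<noteq> i" "c \<noteq> j"
      by linarith
    then show ?thesis
    proof cases
      case 1
      then show ?thesis
        using 3 Cons.prems Cons.IH[of a j] ac rng unfolding x by (simp add: conv_lfun_Cons_upper mult_ac)
    next
      case 2
      then show ?thesis
        using 3 Cons.prems Cons.IH[of a i] ac rng q_nonzero unfolding x
        by (simp add: conv_lfun_Cons_upper field_simps power2_eq_square)
    next
      case 3
      then show ?thesis
        using \<open>a < c\<close> Cons.prems ac rng unfolding x by (simp add: conv_lfun_Cons_upper mult_ac)
    next
      case 4
      then show ?thesis
        using 3 Cons.prems Cons.IH[of i a] ac rng unfolding x by (simp add: conv_lfun_Cons_upper mult_ac)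
    next
      case 5
      then show ?thesis
        using 3 Cons.prems ac rng unfolding x by (simp add: conv_lfun_Cons_upper)
    qed
  qed
qed simp

lemma L_same_row:
  assumes "valid N w" "1 \<le> t" "t + 2 \<le> N"
  shows "conv N (L (t+2) t) (L (t+2) (t+1)) w = q * conv N (L (t+2) (t+1)) (L (t+2) t) w"
  using assms
proof (induction w)
  case (Cons x w)
  obtain a c where x: "x = (a, c)" and ac: "a \<in> {1..N}" "c \<in> {1..N}" "valid N w"
    using Cons.prems by (cases x) auto
  have rng: "t \<in> {1..N}" "t + 1 \<in> {1..N}" "t + 2 \<in> {1..N}"
    using Cons.prems by auto
  consider "a = c" | "c < a" | "a < c" "c \<noteq> t + 2" | "a < t" "c = t + 2" | "a = t" "c = t + 2"
    | "a = t + 1" "c = t + 2"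
    by linarith
  then show ?case
  proof cases
    case 1
    then show ?thesis
      using Cons ac rng unfolding x by (simp add: conv_lfun_Cons_diag mult_ac)
  next
    case 2
    then show ?thesis
      using ac unfolding x by (simp add: conv_lfun_Cons_lower)
  next
    case 3
    then show ?thesis
      using ac rng unfolding x by (simp add: conv_lfun_Cons_upper)
  next
    case 4
    then show ?thesis
      using ac rng unfolding x by (simp add: conv_lfun_Cons_upper conv_L_above_diag_left conv_L_above_diag_right)
  next
    case 5
    then show ?thesis
      using ac rng L_commute[of w t "t+1" "t+2" t] unfolding x
      by (simp add: conv_lfun_Cons_upper conv_L_above_diag_left conv_L_above_diag_right mult_ac)
  next
    case 6
    then show ?thesis
      using Cons.prems ac rng q_nonzero L_commute_diag[of w "t+2" t "t+1"] L_cross[of w t "t+1" "t+2"]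
      unfolding x by (simp add: conv_lfun_Cons_upper) (simp add: field_simps)
  qed
qed simp

lemma cmul_L_cross:
  "1 \<le> n \<Longrightarrow> n < i \<Longrightarrow> i < j \<Longrightarrow> j \<le> N \<Longrightarrow>
    cmul N (L i n) (L j i) = fadd (cmul N (L j i) (L i n)) (scale (q - inverse q) (cmul N (L j n) (L i i)))"
  using L_cross[of _ n i j] by (auto simp: cmul_def canon_def fadd_def scale_def)

lemma cmul_L_commute:
  "1 \<le> r \<Longrightarrow> r < i \<Longrightarrow> i \<le> j \<Longrightarrow> j \<le> N \<Longrightarrow> cmul N (L r n) (L j i) = cmul N (L j i) (L r n)"
  using L_commute[of _ r i j n] by (auto simp: cmul_def canon_def)

lemma cmul_L_same_column:
  "1 \<le> i \<Longrightarrow> i < j \<Longrightarrow> j \<le> N \<Longrightarrow> cmul N (L i m) (L j m) = scale q (cmul N (L j m) (L i m))"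
  using L_same_column[of _ i j m] by (auto simp: cmul_def canon_def scale_def)

lemma cmul_L_same_row:
  "1 \<le> t \<Longrightarrow> t + 2 \<le> N \<Longrightarrow>
    cmul N (L (t+2) t) (L (t+2) (t+1)) = scale q (cmul N (L (t+2) (t+1)) (L (t+2) t))"
  using L_same_row[of _ t] by (auto simp: cmul_def canon_def scale_def)

lemma cmul_L_diag_row:
  "i \<in> {1..N} \<Longrightarrow> n \<in> {1..N} \<Longrightarrow> n \<noteq> i \<Longrightarrow> cmul N (L i n) (L i i) = scale q (cmul N (L i i) (L i n))"
  using L_diag_row[of _ i n] by (auto simp: cmul_def canon_def scale_def)

lemma cmul_L_diag_char:
  assumes "A \<in> {1..N}" "B \<in> {1..N}" "c B \<noteq> 0"
  shows "cmul N (L A B) (diag_char c) = scale (c A / c B) (cmul N (diag_char c) (L A B))"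
  using conv_lfun_diag_char_exchange[of N _ A B c] assms
  by (auto simp: cmul_def canon_def scale_def fun_eq_iff field_simps)

lemma cmul_L_diag_left: "A \<in> {1..N} \<Longrightarrow> cmul N (L A A) f = cmul N (diag_char (K_weight q z A)) f"
  unfolding cmul_def by (rule canon_eqI) (simp add: conv_L_diag_left)

lemma cmul_L_diag_right: "A \<in> {1..N} \<Longrightarrow> cmul N f (L A A) = cmul N f (diag_char (K_weight q z A))"
  unfolding cmul_def by (rule canon_eqI) (simp add: conv_L_diag_right)

text \<open>By the cross relation, \<open>x y - y x\<close> is a multiple of \<open>f K\<close>, which \<open>q\<^sup>2\<close>-commutes with
  \<open>x\<close> and with \<open>y\<close>.\<close>

lemma L_serre_left:
  assumes "1 \<le> s" "s + 2 \<le> N"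
  defines "x \<equiv> L (s+1) s" and "y \<equiv> L (s+2) (s+1)"
  shows "fadd (cmul N x (cmul N x y)) (scale (q^2) (cmul N y (cmul N x x)))
    = scale (1 + q^2) (cmul N x (cmul N y x))"
proof -
  define f where "f = L (s+2) s"
  define K where "K = L (s+1) (s+1)"
  have cross: "cmul N x y = fadd (cmul N y x) (scale (q - inverse q) (cmul N f K))"
    unfolding x_def y_def f_def K_def using cmul_L_cross[of s "s+1" "s+2"] assms by simp
  have xf: "cmul N x f = scale q (cmul N f x)"
    unfolding x_def f_def using cmul_L_same_column[of "s+1" "s+2" s] assms by simp
  have xK: "cmul N x K = scale q (cmul N K x)"
    unfolding x_def K_def using cmul_L_diag_row[of "s+1" s] assms by simp
  have x_fK: "cmul N x (cmul N f K) = scale (q * q) (cmul N (cmul N f K) x)"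
    by (simp add: cmul_assoc[symmetric] xf) (simp add: cmul_assoc xK)
  have xxy: "cmul N x (cmul N x y) =
      fadd (cmul N x (cmul N y x)) (scale ((q - inverse q) * (q * q)) (cmul N (cmul N f K) x))"
    by (simp add: cross cmul_fadd_right x_fK)
  have xyx: "cmul N x (cmul N y x) = fadd (cmul N y (cmul N x x)) (scale (q - inverse q) (cmul N (cmul N f K) x))"
    by (simp add: cmul_assoc[symmetric] cross cmul_fadd_left)
  show ?thesis
    by (simp add: xxy xyx fun_eq_iff fadd_def scale_def algebra_simps power2_eq_square)
qed

lemma L_serre_right:
  assumes "1 \<le> s" "s + 2 \<le> N"
  defines "x \<equiv> L (s+1) s" and "y \<equiv> L (s+2) (s+1)"
  shows "fadd (cmul N x (cmul N y y)) (scale (q^2) (cmul N y (cmul N y x)))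
    = scale (1 + q^2) (cmul N y (cmul N x y))"
proof -
  define f where "f = L (s+2) s"
  define K where "K = L (s+1) (s+1)"
  have cross: "cmul N x y = fadd (cmul N y x) (scale (q - inverse q) (cmul N f K))"
    unfolding x_def y_def f_def K_def using cmul_L_cross[of s "s+1" "s+2"] assms by simp
  have fy: "cmul N f y = scale q (cmul N y f)"
    unfolding y_def f_def using cmul_L_same_row[of s] assms by simp
  have "cmul N y K = scale (inverse q) (cmul N K y)"
    using cmul_L_diag_char[of "s+2" "s+1" "K_weight q z (s+1)"] assms K_weight_nonzero z_nonzero q_nonzero
    unfolding y_def K_def by (simp add: cmul_L_diag_left cmul_L_diag_right K_weight_def inverse_eq_divide)
  then have Ky: "cmul N K y = scale q (cmul N y K)"
    using q_nonzero by simp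
  have fK_y: "cmul N (cmul N f K) y = scale (q * q) (cmul N y (cmul N f K))"
    by (simp add: cmul_assoc Ky) (simp add: cmul_assoc[symmetric] fy)
  have "cmul N x (cmul N y y) = fadd (cmul N (cmul N y x) y) (scale (q - inverse q) (cmul N (cmul N f K) y))"
    by (simp add: cmul_assoc[symmetric] cross cmul_fadd_left)
  then have xyy: "cmul N x (cmul N y y) =
      fadd (cmul N y (cmul N x y)) (scale ((q - inverse q) * (q * q)) (cmul N y (cmul N f K)))"
    unfolding fK_y by (simp add: cmul_assoc)
  have yxy: "cmul N y (cmul N x y) = fadd (cmul N y (cmul N y x)) (scale (q - inverse q) (cmul N y (cmul N f K)))"
    by (simp add: cross cmul_fadd_right)
  show ?thesis
    by (simp add: xyy yxy fun_eq_iff fadd_def scale_def algebra_simps power2_eq_square)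
qed

section \<open>The elements \<open>K\<^sub>i\<close> and \<open>E\<^sub>s\<close>\<close>

lemma prod_K_weight:
  assumes "a \<in> {1..N}"
  shows "(\<Prod>j\<leftarrow>[1..<N+1]. z * (if j = a then q else 1)) = 1"
proof -
  have "(\<Prod>j\<leftarrow>[1..<N+1]. z * (if j = a then q else 1)) = (\<Prod>j\<in>{1..N}. z * (if j = a then q else 1))"
    by (simp add: prod.distinct_set_conv_list[symmetric] atLeastLessThanSuc_atLeastAtMost del: upt_Suc)
  also have "\<dots> = z ^ N * q"
    using assms by (simp add: prod.distrib prod.delta')
  finally show ?thesis
    using z_power q_nonzero by simp
qed

lemma prod_K_weight_column:
  assumes "r \<in> {1..N}"
  shows "(\<Prod>j\<leftarrow>[1..<N+1]. K_weight q z j r) = 1"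
proof -
  have "(\<lambda>j. K_weight q z j r) = (\<lambda>j. z * (if j = r then q else 1))"
    by (auto simp: K_weight_def fun_eq_iff)
  then show ?thesis
    using prod_K_weight[OF assms] by simp
qed

lemma prod_K_weight_row: "i \<in> {1..N} \<Longrightarrow> (\<Prod>r\<leftarrow>[1..<N+1]. K_weight q z i r) = 1"
  using prod_K_weight[of i] by (simp add: K_weight_def)

lemma finite_dual_L_diag: "i \<in> {1..N} \<Longrightarrow> finite_dual N q (L i i)"
  using finite_dual_diag_char[OF prod_K_weight_row] finite_dual_cong[of N "L i i"] by (simp add: lfun_diag)

lemma grouplike_L_diag: "i \<in> {1..N} \<Longrightarrow> grouplike N (L i i)"
  by (simp add: grouplike_def lfun_diag diag_char_append)

lemma L_diag_commute: "i \<in> {1..N} \<Longrightarrow> j \<in> {1..N} \<Longrightarrow> eqH N (conv N (L i i) (L j j)) (conv N (L j j) (L i i))"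
  by (simp add: eqH_iff_canon cmul_def[symmetric] cmul_L_diag_left cmul_L_diag_right cmul_diag_char_diag_char
      mult.commute)

lemma foldr_L_diag:
  "set is \<subseteq> {1..N} \<Longrightarrow>
    eqH N (foldr (\<lambda>i acc. conv N (L i i) acc) is eps) (diag_char (\<lambda>r. \<Prod>i\<leftarrow>is. K_weight q z i r))"
proof (induction "is")
  case (Cons i "is")
  then have "eqH N (foldr (\<lambda>i acc. conv N (L i i) acc) (i # is) eps)
      (conv N (diag_char (K_weight q z i)) (diag_char (\<lambda>r. \<Prod>i\<leftarrow>is. K_weight q z i r)))"
    by (simp, intro eqH_conv) (simp_all add: eqH_def lfun_diag)
  then show ?case
    by (simp add: eqH_def conv_diag_char_diag_char)
qed (simp add: eps_eq_diag_char)

lemma prod_L_diag: "eqH N (foldr (\<lambda>i acc. conv N (L i i) acc) [1..<N+1] eps) eps"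
proof -
  have "eqH N (foldr (\<lambda>i acc. conv N (L i i) acc) [1..<N+1] eps) (diag_char (\<lambda>r. \<Prod>i\<leftarrow>[1..<N+1]. K_weight q z i r))"
    by (rule foldr_L_diag) auto
  also have "eqH N \<dots> eps"
    using prod_K_weight_column unfolding eqH_def eps_eq_diag_char by (blast intro: diag_char_cong)
  finally show ?thesis .
qed

abbreviation K_inv :: "nat \<Rightarrow> word \<Rightarrow> 'k" where
  "K_inv i \<equiv> diag_char (\<lambda>r. inverse (K_weight q z i r))"

lemma cmul_K_K_inv: "cmul N (diag_char (K_weight q z i)) (K_inv i) = canon N eps"
  using K_weight_nonzero by (simp add: cmul_diag_char_diag_char eps_eq_diag_char)

lemma cmul_K_inv_K: "cmul N (K_inv i) (diag_char (K_weight q z i)) = canon N eps"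
  using K_weight_nonzero by (simp add: cmul_diag_char_diag_char eps_eq_diag_char)

lemma cmul_K_K_inv_cancel: "cmul N (diag_char (K_weight q z i)) (cmul N (K_inv i) f) = canon N f"
  by (simp add: cmul_assoc[symmetric] cmul_K_K_inv cmul_eps_left)

lemma finite_dual_K_inv:
  assumes "i \<in> {1..N}"
  shows "finite_dual N q (K_inv i)"
proof (rule finite_dual_diag_char)
  show "(\<Prod>r\<leftarrow>[1..<N+1]. inverse (K_weight q z i r)) = 1"
    unfolding prod_list_inverse prod_K_weight_row[OF assms] by simp
qed

lemma L_diag_K_inv: "i \<in> {1..N} \<Longrightarrow> eqH N (conv N (L i i) (K_inv i)) eps"
  by (simp add: eqH_iff_canon cmul_def[symmetric] cmul_L_diag_left cmul_K_K_inv)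

lemma K_inv_L_diag: "i \<in> {1..N} \<Longrightarrow> eqH N (conv N (K_inv i) (L i i)) eps"
  by (simp add: eqH_iff_canon cmul_def[symmetric] cmul_L_diag_right cmul_K_inv_K)

lemma K_weight_ratio: "K_weight q z i B / K_weight q z i A = q powi (kron i B - kron i A)"
  using z_nonzero q_nonzero by (simp add: K_weight_def kron_def power_int_minus inverse_eq_divide)

lemma cmul_L_K_inv:
  "A \<in> {1..N} \<Longrightarrow> B \<in> {1..N} \<Longrightarrow>
    cmul N (L A B) (K_inv i) = scale (q powi (kron i B - kron i A)) (cmul N (K_inv i) (L A B))"
  using cmul_L_diag_char[of A B "\<lambda>r. inverse (K_weight q z i r)"] K_weight_nonzero
  by (simp add: K_weight_ratio[symmetric] divide_inverse mult.commute)

lemma cmul_L_K_inv_left: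
  "A \<in> {1..N} \<Longrightarrow> B \<in> {1..N} \<Longrightarrow>
    cmul N (L A B) (cmul N (K_inv i) f) = scale (q powi (kron i B - kron i A)) (cmul N (K_inv i) (cmul N (L A B) f))"
  by (simp add: cmul_assoc[symmetric] cmul_L_K_inv)

definition E :: "nat \<Rightarrow> word \<Rightarrow> 'k" where
  "E s = conv N (K_inv (s+1)) (L (s+1) s)"

lemma canon_E: "canon N (E s) = cmul N (K_inv (s+1)) (L (s+1) s)"
  by (simp add: E_def cmul_def)

lemma cmul_E_left: "cmul N (E s) f = cmul N (K_inv (s+1)) (cmul N (L (s+1) s) f)"
  by (simp add: E_def cmul_assoc)

lemma cmul_E_right: "cmul N f (E s) = cmul N f (cmul N (K_inv (s+1)) (L (s+1) s))"
  by (simp add: E_def)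

lemma K_E_K_inv:
  assumes "i \<in> {1..N}" "t \<in> {1..N-1}"
  shows "eqH N (conv N (conv N (L i i) (E t)) (K_inv i)) (\<lambda>w. q powi (kron i t - kron i (t+1)) * E t w)"
proof -
  from assms(2) have "t + 1 \<in> {1..N}" "t \<in> {1..N}"
    by auto
  let ?K = "diag_char (K_weight q z i)"
  have "canon N (conv N (conv N (L i i) (E t)) (K_inv i)) =
      cmul N ?K (cmul N (K_inv (t+1)) (cmul N (L (t+1) t) (K_inv i)))"
    using assms(1) by (simp add: cmul_def[symmetric] cmul_assoc cmul_E_left cmul_L_diag_left)
  also have "\<dots> = scale (q powi (kron i t - kron i (t+1))) (cmul N ?K (cmul N (K_inv (t+1)) (cmul N (K_inv i) (L (t+1) t))))"
    using \<open>t + 1 \<in> {1..N}\<close> \<open>t \<in> {1..N}\<close> by (simp add: cmul_L_K_inv)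
  also have "\<dots> = scale (q powi (kron i t - kron i (t+1))) (cmul N ?K (cmul N (K_inv i) (canon N (E t))))"
    by (simp only: canon_E cmul_diag_char_commute[where c = "\<lambda>r. inverse (K_weight q z (t+1) r)"
        and d = "\<lambda>r. inverse (K_weight q z i r)"])
  also have "\<dots> = canon N (\<lambda>w. q powi (kron i t - kron i (t+1)) * E t w)"
    by (simp add: cmul_K_K_inv_cancel canon_def scale_def fun_eq_iff)
  finally show ?thesis
    by (simp add: eqH_iff_canon)
qed

lemma E_commute:
  assumes "s \<in> {1..N-1}" "t \<in> {1..N-1}" "s > t + 1 \<or> t > s + 1"
  shows "eqH N (conv N (E t) (E s)) (conv N (E s) (E t))"
proof -
  let ?x = "L (s+1) s" and ?y = "L (t+1) t"
  have rng: "s \<in> {1..N}" "s + 1 \<in> {1..N}" "t \<in> {1..N}" "t + 1 \<in> {1..N}"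
    using assms by auto
  have yK: "cmul N ?y (cmul N (K_inv (s+1)) f) = cmul N (K_inv (s+1)) (cmul N ?y f)" for f
    using cmul_L_K_inv_left[of "t+1" t "s+1" f] rng assms(3) by (auto simp: kron_def)
  have xK: "cmul N ?x (cmul N (K_inv (t+1)) f) = cmul N (K_inv (t+1)) (cmul N ?x f)" for f
    using cmul_L_K_inv_left[of "s+1" s "t+1" f] rng assms(3) by (auto simp: kron_def)
  have xy: "cmul N ?x ?y = cmul N ?y ?x"
    using assms(3) cmul_L_commute[of "s+1" t "t+1" s] cmul_L_commute[of "t+1" s "s+1" t] rng by auto
  have "canon N (conv N (E t) (E s)) = cmul N (K_inv (t+1)) (cmul N (K_inv (s+1)) (cmul N ?y ?x))"
    using yK by (simp add: cmul_def[symmetric] cmul_E_left cmul_E_right)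
  also have "\<dots> = cmul N (K_inv (s+1)) (cmul N (K_inv (t+1)) (cmul N ?x ?y))"
    by (simp only: xy cmul_diag_char_commute[where c = "\<lambda>r. inverse (K_weight q z (t+1) r)"])
  also have "\<dots> = canon N (conv N (E s) (E t))"
    using xK by (simp add: cmul_def[symmetric] cmul_E_left cmul_E_right)
  finally show ?thesis
    by (simp add: eqH_iff_canon)
qed

lemma E_serre:
  assumes "1 \<le> s" "s + 2 \<le> N"
  shows "eqH N (serre N q (E s) (E (s+1))) (\<lambda>w. 0)" and "eqH N (serre N q (E (s+1)) (E s)) (\<lambda>w. 0)"
proof -
  define a b x y where "a = K_inv (s+1)" and "b = K_inv (s+2)" and "x = L (s+1) s" and "y = L (s+2) (s+1)"
  define e e' where "e = E s" and "e' = E (s+1)"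
  have rng: "s \<in> {1..N}" "s + 1 \<in> {1..N}" "s + 2 \<in> {1..N}"
    using assms by auto
  have xa: "cmul N x (cmul N a f) = scale (inverse q) (cmul N a (cmul N x f))" for f
    unfolding x_def a_def using cmul_L_K_inv_left[of "s+1" s "s+1" f] rng by (simp add: kron_def)
  have xb: "cmul N x (cmul N b f) = cmul N b (cmul N x f)" for f
    unfolding x_def b_def using cmul_L_K_inv_left[of "s+1" s "s+2" f] rng by (simp add: kron_def)
  have ya: "cmul N y (cmul N a f) = scale q (cmul N a (cmul N y f))" for f
    unfolding y_def a_def using cmul_L_K_inv_left[of "s+2" "s+1" "s+1" f] rng by (simp add: kron_def)
  have yb: "cmul N y (cmul N b f) = scale (inverse q) (cmul N b (cmul N y f))" for f
    unfolding y_def b_def using cmul_L_K_inv_left[of "s+2" "s+1" "s+2" f] rng by (simp add: kron_def)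
  have ba: "cmul N b (cmul N a f) = cmul N a (cmul N b f)" for f
    unfolding a_def b_def by (rule cmul_diag_char_commute)
  have e: "cmul N e f = cmul N a (cmul N x f)" "cmul N f e = cmul N f (cmul N a x)" for f
    unfolding e_def a_def x_def by (simp_all add: cmul_E_left cmul_E_right)
  have e': "cmul N e' f = cmul N b (cmul N y f)" "cmul N f e' = cmul N f (cmul N b y)" for f
    unfolding e'_def b_def y_def by (simp_all add: cmul_E_left cmul_E_right add.assoc)
  \<comment> \<open>moving every \<open>K\<^sub>i\<^sup>-\<^sup>1\<close> to the front turns each Serre monomial in \<open>e, e'\<close> into a
    multiple of the same monomial in \<open>x, y\<close>, so both relations reduce to the ones for the \<open>l\<^sub>i\<^sub>j\<close>\<close>
  note normal_form = e e' cmul_assoc xa xb ya yb ba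
  have "cmul N a (cmul N a (cmul N b (fadd (cmul N x (cmul N x y)) (scale (q^2) (cmul N y (cmul N x x))))))
      = cmul N a (cmul N a (cmul N b (scale (1 + q^2) (cmul N x (cmul N y x)))))"
    unfolding x_def y_def L_serre_left[OF assms] ..
  then have left: "cmul N a (cmul N a (cmul N b (cmul N x (cmul N x y)))) w
      = (1 + q^2) * cmul N a (cmul N a (cmul N b (cmul N x (cmul N y x)))) w
        - q^2 * cmul N a (cmul N a (cmul N b (cmul N y (cmul N x x)))) w" for w
    by (simp only: cmul_fadd_right cmul_scale_right) (simp add: fun_eq_iff fadd_def scale_def eq_diff_eq)
  have "cmul N a (cmul N b (cmul N b (fadd (cmul N x (cmul N y y)) (scale (q^2) (cmul N y (cmul N y x))))))
      = cmul N a (cmul N b (cmul N b (scale (1 + q^2) (cmul N y (cmul N x y)))))"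
    unfolding x_def y_def L_serre_right[OF assms] ..
  then have right: "cmul N a (cmul N b (cmul N b (cmul N x (cmul N y y)))) w
      = (1 + q^2) * cmul N a (cmul N b (cmul N b (cmul N y (cmul N x y)))) w
        - q^2 * cmul N a (cmul N b (cmul N b (cmul N y (cmul N y x)))) w" for w
    by (simp only: cmul_fadd_right cmul_scale_right) (simp add: fun_eq_iff fadd_def scale_def eq_diff_eq)
  show "eqH N (serre N q (E s) (E (s+1))) (\<lambda>w. 0)"
    unfolding eqH_def e_def[symmetric] e'_def[symmetric] using q_nonzero
    by (simp add: serre_eq_cmul normal_form) (simp add: scale_def left field_simps power2_eq_square)
  show "eqH N (serre N q (E (s+1)) (E s)) (\<lambda>w. 0)"
    unfolding eqH_def e_def[symmetric] e'_def[symmetric] using q_nonzero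
    by (simp add: serre_eq_cmul normal_form) (simp add: scale_def right field_simps power2_eq_square)
qed

lemma E_serre_adjacent:
  assumes "s \<in> {1..N-1}" "t \<in> {1..N-1}" "s = t + 1 \<or> t = s + 1"
  shows "eqH N (serre N q (E s) (E t)) (\<lambda>w. 0)"
  using assms E_serre[of s] E_serre[of t] by auto

section \<open>The functionals \<open>r\<^sub>i\<^sub>j\<close> and the elements \<open>F\<^sub>s\<close>\<close>

abbreviation R :: "nat \<Rightarrow> nat \<Rightarrow> word \<Rightarrow> 'k" where
  "R \<equiv> rfun N q z"

lemma eqH_mirror_fun_R: "A \<in> {1..N} \<Longrightarrow> B \<in> {1..N} \<Longrightarrow> eqH N (mirror_fun N (R A B)) (L (mirror N A) (mirror N B))"
  by (simp add: eqH_def mirror_fun_def rfun_eq_lfun_mirror valid_mirror_word mirror_word_mirror_word)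

lemma eqH_mirror_fun_L:
  assumes "A \<in> {1..N}" "B \<in> {1..N}"
  shows "eqH N (mirror_fun N (L A B)) (R (mirror N A) (mirror N B))"
  using assms mirror_in_range[of A N] mirror_in_range[of B N]
  by (simp add: eqH_def mirror_fun_def rfun_eq_lfun_mirror mirror_mirror)

lemma K_weight_mirror: "i \<in> {1..N} \<Longrightarrow> r \<in> {1..N} \<Longrightarrow> K_weight q z i (mirror N r) = K_weight q z (mirror N i) r"
  by (auto simp: K_weight_def mirror_def)

lemma eqH_mirror_fun_L_diag:
  assumes "i \<in> {1..N}"
  shows "eqH N (mirror_fun N (L i i)) (L (mirror N i) (mirror N i))"
  unfolding eqH_def mirror_fun_def
proof (intro allI impI)
  fix w :: word
  assume w: "valid N w"
  then have "L i i (mirror_word N w) = diag_char (\<lambda>r. K_weight q z i (mirror N r)) w"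
    using assms by (simp add: lfun_diag valid_mirror_word diag_char_mirror_word)
  also have "\<dots> = diag_char (K_weight q z (mirror N i)) w"
    using assms by (intro diag_char_cong[OF _ w]) (simp add: K_weight_mirror)
  also have "\<dots> = L (mirror N i) (mirror N i) w"
    using w mirror_in_range[OF assms] by (simp add: lfun_diag)
  finally show "L i i (mirror_word N w) = L (mirror N i) (mirror N i) w" .
qed

lemma eqH_mirror_fun_K_inv:
  assumes "i \<in> {1..N}"
  shows "eqH N (mirror_fun N (K_inv i)) (K_inv (mirror N i))"
  unfolding eqH_def mirror_fun_def
proof (intro allI impI)
  fix w :: word
  assume w: "valid N w"
  then have "K_inv i (mirror_word N w) = diag_char (\<lambda>r. inverse (K_weight q z i (mirror N r))) w"
    by (simp add: diag_char_mirror_word)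
  also have "\<dots> = K_inv (mirror N i) w"
    using assms by (intro diag_char_cong[OF _ w]) (simp add: K_weight_mirror)
  finally show "K_inv i (mirror_word N w) = K_inv (mirror N i) w" .
qed

lemma R_diag: "A \<in> {1..N} \<Longrightarrow> eqH N (R A A) (L A A)"
  using eqH_mirror_fun_L_diag[OF mirror_in_range, of A]
  by (simp add: eqH_def mirror_fun_def rfun_eq_lfun_mirror mirror_mirror)

definition F :: "nat \<Rightarrow> word \<Rightarrow> 'k" where
  "F s = (\<lambda>w. inverse ((q - inverse q)^2) * conv N (K_inv s) (R s (s+1)) w)"

lemma eqH_mirror_fun_F:
  assumes "t \<in> {1..N-1}"
  shows "eqH N (mirror_fun N (F t)) (\<lambda>w. inverse ((q - inverse q)^2) * E (N - t) w)"
proof -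
  have t: "t \<in> {1..N}" "t + 1 \<in> {1..N}" and m: "mirror N t = N - t + 1" "mirror N (t+1) = N - t"
    using assms by (auto simp: mirror_def)
  have "eqH N (mirror_fun N (conv N (K_inv t) (R t (t+1)))) (conv N (K_inv (mirror N t)) (L (mirror N t) (mirror N (t+1))))"
    using t by (intro eqH_trans[OF eqH_mirror_fun_conv] eqH_conv eqH_mirror_fun_K_inv eqH_mirror_fun_R)
  then show ?thesis
    unfolding F_def mirror_fun_scale m E_def by (rule eqH_scale)
qed

lemma mirror_kron:
  "t \<in> {1..N-1} \<Longrightarrow> i \<in> {1..N} \<Longrightarrow> kron (mirror N i) (N - t) = kron i (t+1) \<and> kron (mirror N i) (N - t + 1) = kron i t"
  by (auto simp: kron_def mirror_def)

lemma K_F_K_inv: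
  assumes "i \<in> {1..N}" "t \<in> {1..N-1}"
  shows "eqH N (conv N (conv N (L i i) (F t)) (K_inv i)) (\<lambda>w. q powi (kron i (t+1) - kron i t) * F t w)"
proof -
  let ?c = "inverse ((q - inverse q)^2)" and ?j = "mirror N i" and ?u = "N - t"
  have u: "?u \<in> {1..N-1}"
    using assms(2) by auto
  have "eqH N (mirror_fun N (conv N (conv N (L i i) (F t)) (K_inv i)))
      (conv N (conv N (L ?j ?j) (\<lambda>w. ?c * E ?u w)) (K_inv ?j))"
    using assms by (intro eqH_trans[OF eqH_mirror_fun_conv] eqH_conv eqH_trans[OF eqH_mirror_fun_conv]
        eqH_mirror_fun_L_diag eqH_mirror_fun_F eqH_mirror_fun_K_inv)
  also have "eqH N \<dots> (\<lambda>w. ?c * (q powi (kron i (t+1) - kron i t) * E ?u w))"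
    using K_E_K_inv[OF mirror_in_range[OF assms(1)] u] mirror_kron[OF assms(2,1)]
    by (simp add: eqH_def conv_scale_left conv_scale_right)
  also have "eqH N \<dots> (mirror_fun N (\<lambda>w. q powi (kron i (t+1) - kron i t) * F t w))"
    using eqH_mirror_fun_F[OF assms(2)] by (simp add: eqH_def mirror_fun_scale)
  finally show ?thesis
    by (simp add: eqH_mirror_fun_iff)
qed

lemma F_commute:
  assumes "s \<in> {1..N-1}" "t \<in> {1..N-1}" "s > t + 1 \<or> t > s + 1"
  shows "eqH N (conv N (F t) (F s)) (conv N (F s) (F t))"
proof -
  let ?c = "inverse ((q - inverse q)^2)"
  have E: "eqH N (conv N (E (N - t)) (E (N - s))) (conv N (E (N - s)) (E (N - t)))"
    using assms by (intro E_commute) auto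
  have "eqH N (mirror_fun N (conv N (F t) (F s))) (conv N (\<lambda>w. ?c * E (N - t) w) (\<lambda>w. ?c * E (N - s) w))"
    using assms by (intro eqH_trans[OF eqH_mirror_fun_conv] eqH_conv eqH_mirror_fun_F)
  also have "eqH N \<dots> (conv N (\<lambda>w. ?c * E (N - s) w) (\<lambda>w. ?c * E (N - t) w))"
    using E by (simp add: eqH_def conv_scale_left conv_scale_right)
  also have "eqH N \<dots> (mirror_fun N (conv N (F s) (F t)))"
    using assms by (intro eqH_sym[OF eqH_trans[OF eqH_mirror_fun_conv]] eqH_conv eqH_mirror_fun_F)
  finally show ?thesis
    by (simp add: eqH_mirror_fun_iff)
qed

lemma F_serre:
  assumes "s \<in> {1..N-1}" "t \<in> {1..N-1}" "s = t + 1 \<or> t = s + 1"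
  shows "eqH N (serre N q (F s) (F t)) (\<lambda>w. 0)"
proof -
  let ?c = "inverse ((q - inverse q)^2)"
  have E: "eqH N (serre N q (E (N - s)) (E (N - t))) (\<lambda>w. 0)"
    using assms by (intro E_serre_adjacent) auto
  have "eqH N (mirror_fun N (serre N q (F s) (F t))) (serre N q (\<lambda>w. ?c * E (N - s) w) (\<lambda>w. ?c * E (N - t) w))"
    using assms by (intro eqH_trans[OF eqH_mirror_fun_serre] eqH_serre eqH_mirror_fun_F)
  also have "eqH N \<dots> (mirror_fun N (\<lambda>w. 0))"
    using E by (simp add: serre_scale eqH_def mirror_fun_def)
  finally show ?thesis
    by (simp add: eqH_mirror_fun_iff)
qed

section \<open>Generators of \<open>H\<^sub>l\<close> and \<open>H\<^sub>r\<close>\<close>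

lemma prod_diag_word_except:
  assumes "i \<in> {1..N}" "r \<in> {1..N}"
  shows "(\<Prod>b\<leftarrow>diag_word_except N i. K_weight q z (fst b) r) = inverse (K_weight q z i r)"
  using prod_list_upt_remove[OF assms(1), of "\<lambda>j. K_weight q z j r"] prod_K_weight_column[OF assms(2)]
    K_weight_nonzero[of i r]
  by (simp add: diag_word_except_def o_def field_simps del: upt_Suc)

lemma K_inv_eqH_lprod:
  assumes "i \<in> {1..N}"
  shows "eqH N (K_inv i) (lprod N q z (diag_word_except N i))"
proof -
  have "eqH N (lprod N q z (diag_word_except N i)) (diag_char (\<lambda>r. \<Prod>b\<leftarrow>diag_word_except N i. K_weight q z (fst b) r))"
    by (rule lprod_diag) (auto simp: diag_word_except_def)
  also have "eqH N \<dots> (K_inv i)"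
    using prod_diag_word_except[OF assms] unfolding eqH_def by (blast intro: diag_char_cong)
  finally show ?thesis
    by (rule eqH_sym)
qed

lemma cmul_L_diag_K_inv_cancel: "A \<in> {1..N} \<Longrightarrow> cmul N (L A A) (cmul N (K_inv A) f) = canon N f"
  by (simp add: cmul_L_diag_left cmul_K_K_inv_cancel)

lemma L_subdiag_eq:
  assumes "s \<in> {1..N-1}"
  shows "eqH N (L (s+1) s) (conv N (L (s+1) (s+1)) (E s))"
proof -
  have "s + 1 \<in> {1..N}"
    using assms by auto
  then show ?thesis
    by (simp add: eqH_iff_canon cmul_def[symmetric] cmul_E_right cmul_L_diag_K_inv_cancel)
qed

lemma L_eq_commutator:
  assumes "1 \<le> n" "n < i" "i < j" "j \<le> N"
  shows "eqH N (L j n) (\<lambda>w. inverse (q - inverse q) * conv N (conv N (L i n) (L j i)) (K_inv i) w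
    + - inverse (q - inverse q) * conv N (conv N (L j i) (L i n)) (K_inv i) w)"
proof -
  have i: "i \<in> {1..N}"
    using assms by auto
  have "cmul N (cmul N (L i n) (L j i)) (K_inv i) =
      fadd (cmul N (cmul N (L j i) (L i n)) (K_inv i)) (scale (q - inverse q) (canon N (L j n)))"
    using assms by (simp add: cmul_L_cross cmul_fadd_left cmul_assoc cmul_L_diag_left cmul_K_K_inv cmul_eps_right)
  then have "conv N (conv N (L i n) (L j i)) (K_inv i) w =
      conv N (conv N (L j i) (L i n)) (K_inv i) w + (q - inverse q) * L j n w" if "valid N w" for w
    using fun_cong[of _ _ w] that by (fastforce simp: fadd_def scale_def canon_def conv_eq_cmul)
  then show ?thesis
    using q_minus_inverse_nonzero by (simp add: eqH_def distrib_left mult.assoc[symmetric])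
qed

lemma L_in_alg_gen:
  assumes "\<And>i. i \<in> {1..N} \<Longrightarrow> L i i \<in> S" "\<And>i. i \<in> {1..N} \<Longrightarrow> K_inv i \<in> S"
    and "\<And>s. s \<in> {1..N-1} \<Longrightarrow> E s \<in> S"
  shows "A \<in> {1..N} \<Longrightarrow> B \<in> {1..N} \<Longrightarrow> \<exists>G\<in>alg_gen N S. eqH N (L A B) G"
proof (induction "A - B" arbitrary: A B rule: less_induct)
  case less
  consider "A < B" | "A = B" | "A = B + 1" | "B + 1 < A"
    by linarith
  then show ?case
  proof cases
    case 1
    then show ?thesis
      using less.prems zero_in_alg_gen by (force simp: eqH_def lfun_above_diag)
  next
    case 2
    then show ?thesis
      using assms(1) less.prems by (force intro: alg_gen.gen)
  next
    case 3
    then have "B \<in> {1..N-1}"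
      using less.prems by auto
    then show ?thesis
      using assms(1,3) L_subdiag_eq[of B] less.prems 3 by (force intro: alg_gen.mult alg_gen.gen)
  next
    case 4
    define i where "i = A - 1"
    have i: "B < i" "i < A" "i \<in> {1..N}"
      using 4 less.prems by (auto simp: i_def)
    have "\<exists>G\<in>alg_gen N S. eqH N (L i B) G" "\<exists>G\<in>alg_gen N S. eqH N (L A i) G"
      using i less.prems by (auto intro!: less.hyps)
    then obtain G1 G2 where G1: "G1 \<in> alg_gen N S" "eqH N (L i B) G1"
      and G2: "G2 \<in> alg_gen N S" "eqH N (L A i) G2"
      by blast
    let ?c = "inverse (q - inverse q)"
    have "(\<lambda>w. ?c * conv N (conv N G1 G2) (K_inv i) w + - ?c * conv N (conv N G2 G1) (K_inv i) w) \<in> alg_gen N S"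
      using i by (intro alg_gen.add alg_gen.smult alg_gen.mult G1(1) G2(1) alg_gen.gen[OF assms(2)])
    moreover have "eqH N (L A B) (\<lambda>w. ?c * conv N (conv N G1 G2) (K_inv i) w + - ?c * conv N (conv N G2 G1) (K_inv i) w)"
      using L_eq_commutator[of B i A] i less.prems eqH_conv[OF eqH_conv[OF G1(2) G2(2)] eqH_refl, of "K_inv i"]
        eqH_conv[OF eqH_conv[OF G2(2) G1(2)] eqH_refl, of "K_inv i"]
      by (simp add: eqH_def)
    ultimately show ?thesis
      by blast
  qed
qed

lemma lprod_in_alg_gen:
  assumes "\<And>i. i \<in> {1..N} \<Longrightarrow> L i i \<in> S" "\<And>i. i \<in> {1..N} \<Longrightarrow> K_inv i \<in> S"
    and "\<And>s. s \<in> {1..N-1} \<Longrightarrow> E s \<in> S"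
  shows "valid N g \<Longrightarrow> \<exists>G\<in>alg_gen N S. eqH N (lprod N q z g) G"
proof (induction g)
  case Nil
  show ?case
    by (intro bexI[of _ eps] alg_gen.unit) (simp add: eqH_def)
next
  case (Cons b g)
  then obtain G1 G2 where "G1 \<in> alg_gen N S" "eqH N (lprod N q z g) G1"
    and "G2 \<in> alg_gen N S" "eqH N (L (fst b) (snd b)) G2"
    using L_in_alg_gen[OF assms, of "fst b" "snd b"] by auto
  then show ?case
    by (intro bexI[of _ "conv N G1 G2"]) (simp_all add: eqH_conv alg_gen.mult)
qed

lemma E_eqH_lprod:
  assumes "s \<in> {1..N-1}"
  shows "eqH N (E s) (lprod N q z ((s+1, s) # diag_word_except N (s+1)))"
proof -
  have "s + 1 \<in> {1..N}"
    using assms by auto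
  then show ?thesis
    unfolding E_def using K_inv_eqH_lprod[of "s+1"] by (auto intro: eqH_conv)
qed

lemma H_l_generated:
  "generated_by N (H_l N q z) ({L i i | i. i \<in> {1..N}} \<union> {K_inv i | i. i \<in> {1..N}} \<union> {E s | s. s \<in> {1..N-1}})"
  (is "generated_by N _ ?S")
proof (rule generated_byI[where \<Phi> = "\<lambda>g w. sigf N q z w g" and m = "\<lambda>g h. h @ g" and g\<^sub>0 = "[]"])
  show "H_l N q z = {lin_comb (\<lambda>g w. sigf N q z w g) xs |xs. \<forall>(c, g)\<in>set xs. valid N g}"
    by (simp add: H_l_def lin_comb_def)
  show "\<exists>G\<in>alg_gen N ?S. eqH N (\<lambda>w. sigf N q z w g) G" if "valid N g" for g
    using lprod_in_alg_gen[of ?S g] that by (auto simp: eqH_def sigf_eq_lprod)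
  show "\<exists>c g. valid N g \<and> eqH N f (\<lambda>w. c * sigf N q z w g)" if "f \<in> ?S" for f
  proof -
    consider (K) i where "i \<in> {1..N}" "f = L i i" | (K_inv) i where "i \<in> {1..N}" "f = K_inv i"
      | (E) s where "s \<in> {1..N-1}" "f = E s"
      using \<open>f \<in> ?S\<close> by blast
    then have "\<exists>g. valid N g \<and> eqH N f (lprod N q z g)"
    proof cases
      case K
      then show ?thesis
        by (intro exI[of _ "[(i, i)]"]) (simp add: eqH_def conv_eps_left)
    next
      case K_inv
      then show ?thesis
        using K_inv_eqH_lprod valid_diag_word_except by blast
    next
      case E
      then show ?thesis
        using E_eqH_lprod[of s] valid_diag_word_except[of N "s+1"]
        by (intro exI[of _ "(s+1, s) # diag_word_except N (s+1)"]) auto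
    qed
    then obtain g where "valid N g" "eqH N f (lprod N q z g)"
      by blast
    then show ?thesis
      by (intro exI[of _ 1] exI[of _ g]) (simp add: eqH_def sigf_eq_lprod)
  qed
  show "valid N (h @ g) \<and> eqH N (conv N (\<lambda>w. sigf N q z w g) (\<lambda>w. sigf N q z w h)) (\<lambda>w. sigf N q z w (h @ g))"
    if "valid N g" "valid N h" for g h
    using that by (simp add: eqH_def sigf_append_second)
  show "valid N []" "eqH N eps (\<lambda>w. sigf N q z w [])"
    by (simp_all add: eqH_def sigf_eq_lprod)
qed

lemma eqH_mirror_fun_E:
  assumes "s \<in> {1..N-1}"
  shows "eqH N (mirror_fun N (E s)) (\<lambda>w. (q - inverse q)^2 * F (N - s) w)"
proof -
  define c where "c = inverse ((q - inverse q)^2)"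
  have "c \<noteq> 0"
    using q_minus_inverse_nonzero by (simp add: c_def)
  have "N - s \<in> {1..N-1}" "N - (N - s) = s"
    using assms by auto
  then have "eqH N (mirror_fun N (F (N - s))) (\<lambda>w. c * E s w)"
    using eqH_mirror_fun_F[of "N - s"] by (simp add: c_def)
  then have "eqH N (mirror_fun N (mirror_fun N (F (N - s)))) (mirror_fun N (\<lambda>w. c * E s w))"
    by (rule eqH_mirror_fun)
  then have "eqH N (\<lambda>w. c * mirror_fun N (E s) w) (F (N - s))"
    using eqH_mirror_fun_mirror_fun[of N "F (N - s)"] by (simp add: eqH_def mirror_fun_def)
  then have "eqH N (\<lambda>w. inverse c * (c * mirror_fun N (E s) w)) (\<lambda>w. inverse c * F (N - s) w)"
    by (rule eqH_scale)
  then have "eqH N (mirror_fun N (E s)) (\<lambda>w. inverse c * F (N - s) w)"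
    using \<open>c \<noteq> 0\<close> by (simp add: eqH_def mult.assoc[symmetric])
  then show ?thesis
    by (simp add: c_def)
qed

lemma R_in_alg_gen:
  assumes "\<And>i. i \<in> {1..N} \<Longrightarrow> L i i \<in> S" "\<And>i. i \<in> {1..N} \<Longrightarrow> K_inv i \<in> S"
    and "\<And>s. s \<in> {1..N-1} \<Longrightarrow> F s \<in> S"
    and "A \<in> {1..N}" "B \<in> {1..N}"
  shows "\<exists>G\<in>alg_gen N S. eqH N (R A B) G"
proof -
  let ?S = "{L i i | i. i \<in> {1..N}} \<union> {K_inv i | i. i \<in> {1..N}} \<union> {E s | s. s \<in> {1..N-1}}"
  have "\<exists>G\<in>alg_gen N S. eqH N (mirror_fun N f) G" if f: "f \<in> ?S" for f
  proof -
    consider (K) i where "i \<in> {1..N}" "f = L i i" | (K_inv) i where "i \<in> {1..N}" "f = K_inv i"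
      | (E) s where "s \<in> {1..N-1}" "f = E s"
      using f by blast
    then show ?thesis
    proof cases
      case K
      then show ?thesis
        using alg_gen.gen[OF assms(1)[OF mirror_in_range]] eqH_mirror_fun_L_diag by blast
    next
      case K_inv
      then show ?thesis
        using alg_gen.gen[OF assms(2)[OF mirror_in_range]] eqH_mirror_fun_K_inv by blast
    next
      case E
      then have "N - s \<in> {1..N-1}"
        by auto
      then show ?thesis
        using E eqH_mirror_fun_E[of s] by (blast intro: alg_gen.smult alg_gen.gen assms(3))
    qed
  qed
  moreover obtain G where "G \<in> alg_gen N ?S" "eqH N (L (mirror N A) (mirror N B)) G"
    using L_in_alg_gen[of ?S "mirror N A" "mirror N B"] assms(4,5) mirror_in_range by blast
  ultimately obtain G' where "G' \<in> alg_gen N S" "eqH N (mirror_fun N G) G'"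
    using alg_gen_mirror[of ?S N S G] by blast
  moreover have "eqH N (R A B) (mirror_fun N G)"
    using eqH_mirror_fun[OF \<open>eqH N (L (mirror N A) (mirror N B)) G\<close>]
      eqH_mirror_fun_L[OF mirror_in_range mirror_in_range, of A B] assms(4,5)
    by (simp add: mirror_mirror eqH_def)
  ultimately show ?thesis
    using eqH_trans by blast
qed

lemma sig1_eq_R: "valid N w \<Longrightarrow> sig1 N q z w a = R (fst a) (snd a) w"
  by (simp add: rfun_def conv_eps_right del: sig1.simps)

lemma sigf_diag:
  assumes "\<forall>b\<in>set g. fst b = snd b \<and> fst b \<in> {1..N}"
  shows "eqH N (sigf N q z g) (diag_char (\<lambda>r. \<Prod>b\<leftarrow>g. K_weight q z (fst b) r))"
  using assms
proof (induction g)
  case (Cons b g)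
  have "eqH N (\<lambda>w. sig1 N q z w b) (diag_char (K_weight q z (fst b)))"
    using Cons.prems R_diag[of "fst b"] by (auto simp: eqH_def sig1_eq_R lfun_diag simp del: sig1.simps)
  then have "eqH N (sigf N q z (b # g)) (conv N (diag_char (K_weight q z (fst b))) (diag_char (\<lambda>r. \<Prod>b\<leftarrow>g. K_weight q z (fst b) r)))"
    using Cons by (simp del: sig1.simps, intro eqH_conv) simp_all
  then show ?case
    by (simp add: eqH_def conv_diag_char_diag_char)
qed (simp add: eps_eq_diag_char)

lemma K_inv_eqH_sigf:
  assumes "i \<in> {1..N}"
  shows "eqH N (K_inv i) (sigf N q z (diag_word_except N i))"
proof -
  have "eqH N (sigf N q z (diag_word_except N i)) (diag_char (\<lambda>r. \<Prod>b\<leftarrow>diag_word_except N i. K_weight q z (fst b) r))"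
    by (rule sigf_diag) (auto simp: diag_word_except_def)
  also have "eqH N \<dots> (K_inv i)"
    using prod_diag_word_except[OF assms] unfolding eqH_def by (blast intro: diag_char_cong)
  finally show ?thesis
    by (rule eqH_sym)
qed

lemma sigf_in_alg_gen:
  assumes "\<And>i. i \<in> {1..N} \<Longrightarrow> L i i \<in> S" "\<And>i. i \<in> {1..N} \<Longrightarrow> K_inv i \<in> S"
    and "\<And>s. s \<in> {1..N-1} \<Longrightarrow> F s \<in> S"
  shows "valid N g \<Longrightarrow> \<exists>G\<in>alg_gen N S. eqH N (sigf N q z g) G"
proof (induction g)
  case Nil
  show ?case
    by (intro bexI[of _ eps] alg_gen.unit) simp
next
  case (Cons a g)
  then obtain G1 G2 where G1: "G1 \<in> alg_gen N S" "eqH N (R (fst a) (snd a)) G1"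
    and G2: "G2 \<in> alg_gen N S" "eqH N (sigf N q z g) G2"
    using R_in_alg_gen[OF assms, of "fst a" "snd a"] by auto
  have "eqH N (\<lambda>w. sig1 N q z w a) G1"
    using G1(2) by (simp add: eqH_def sig1_eq_R del: sig1.simps)
  then have "eqH N (sigf N q z (a # g)) (conv N G1 G2)"
    using G2(2) by (simp del: sig1.simps) (rule eqH_conv)
  then show ?case
    using G1(1) G2(1) by (blast intro: alg_gen.mult)
qed

lemma F_eqH_sigf:
  assumes "s \<in> {1..N-1}"
  shows "eqH N (F s) (\<lambda>w. inverse ((q - inverse q)^2) * sigf N q z (diag_word_except N s @ [(s, s+1)]) w)"
proof -
  have s: "s \<in> {1..N}" "s + 1 \<in> {1..N}"
    using assms by auto
  have "eqH N (conv N (K_inv s) (R s (s+1))) (sigf N q z (diag_word_except N s @ [(s, s+1)]))"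
    using K_inv_eqH_sigf[OF s(1)] valid_diag_word_except[of N s] s
    by (auto simp: eqH_def sigf_append rfun_def intro: conv_cong)
  then show ?thesis
    unfolding F_def by (rule eqH_scale)
qed

lemma H_r_generated:
  "generated_by N (H_r N q z) ({L i i | i. i \<in> {1..N}} \<union> {K_inv i | i. i \<in> {1..N}} \<union> {F s | s. s \<in> {1..N-1}})"
  (is "generated_by N _ ?S")
proof (rule generated_byI[where \<Phi> = "sigf N q z" and m = "\<lambda>g h. g @ h" and g\<^sub>0 = "[]"])
  show "H_r N q z = {lin_comb (sigf N q z) xs |xs. \<forall>(c, g)\<in>set xs. valid N g}"
    by (simp add: H_r_def lin_comb_def)
  show "\<exists>G\<in>alg_gen N ?S. eqH N (sigf N q z g) G" if "valid N g" for g
    using sigf_in_alg_gen[of ?S g] that by blast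
  show "\<exists>c g. valid N g \<and> eqH N f (\<lambda>w. c * sigf N q z g w)" if "f \<in> ?S" for f
  proof -
    consider (K) i where "i \<in> {1..N}" "f = L i i" | (K_inv) i where "i \<in> {1..N}" "f = K_inv i"
      | (F) s where "s \<in> {1..N-1}" "f = F s"
      using \<open>f \<in> ?S\<close> by blast
    then show ?thesis
    proof cases
      case K
      then show ?thesis
        using R_diag[of i] by (intro exI[of _ 1] exI[of _ "[(i, i)]"]) (simp add: eqH_def rfun_def)
    next
      case K_inv
      then show ?thesis
        using K_inv_eqH_sigf[of i] valid_diag_word_except[of N i] by (intro exI[of _ 1]) auto
    next
      case F
      then show ?thesis
        using F_eqH_sigf[of s] valid_diag_word_except[of N s]
        by (intro exI[of _ "inverse ((q - inverse q)^2)"] exI[of _ "diag_word_except N s @ [(s, s+1)]"]) auto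
    qed
  qed
  show "valid N (g @ h) \<and> eqH N (conv N (sigf N q z g) (sigf N q z h)) (sigf N q z (g @ h))"
    if "valid N g" "valid N h" for g h
    using that by (simp add: eqH_def sigf_append)
  show "valid N []" "eqH N eps (sigf N q z [])"
    by simp_all
qed

end

theorem proposition4p3:
  fixes q z :: "'k::field" and N :: nat
  assumes hq: "q \<noteq> 0" and hq2: "q ^ 2 \<noteq> 1" and hN: "N \<ge> 2" and hz: "z ^ N = inverse q"
  defines "K \<equiv> (\<lambda>i. lfun N q z i i)"
  shows "(\<forall>i\<in>{1..N}. eqH N (lfun N q z i i) (rfun N q z i i) \<and>
                      finite_dual N q (K i) \<and> grouplike N (K i))
    \<and> (\<exists>Kinv :: nat \<Rightarrow> word \<Rightarrow> 'k.
        (\<forall>i\<in>{1..N}. finite_dual N q (Kinv i)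
            \<and> eqH N (conv N (K i) (Kinv i)) eps \<and> eqH N (conv N (Kinv i) (K i)) eps)
      \<and> (let E = (\<lambda>s. conv N (Kinv (s+1)) (lfun N q z (s+1) s));
             F = (\<lambda>s w. inverse ((q - inverse q) ^ 2) * conv N (Kinv s) (rfun N q z s (s+1)) w);
             KK = {K i | i. i \<in> {1..N}} \<union> {Kinv i | i. i \<in> {1..N}}
         in generated_by N (H_l N q z) (KK \<union> {E s | s. s \<in> {1..N-1}})
          \<and> generated_by N (H_r N q z) (KK \<union> {F s | s. s \<in> {1..N-1}})
          \<and> (\<forall>i\<in>{1..N}. \<forall>j\<in>{1..N}. eqH N (conv N (K i) (K j)) (conv N (K j) (K i)))
          \<and> eqH N (foldr (\<lambda>i acc. conv N (K i) acc) [1..<N+1] eps) eps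
          \<and> (\<forall>i\<in>{1..N}. \<forall>t\<in>{1..N-1}.
               eqH N (conv N (conv N (K i) (E t)) (Kinv i))
                     (\<lambda>w. q powi (kron i t - kron i (t+1)) * E t w)
             \<and> eqH N (conv N (conv N (K i) (F t)) (Kinv i))
                     (\<lambda>w. q powi (kron i (t+1) - kron i t) * F t w))
          \<and> (\<forall>s\<in>{1..N-1}. \<forall>t\<in>{1..N-1}. (s > t + 1 \<or> t > s + 1) \<longrightarrow>
               eqH N (conv N (E t) (E s)) (conv N (E s) (E t))
             \<and> eqH N (conv N (F t) (F s)) (conv N (F s) (F t)))
          \<and> (\<forall>s\<in>{1..N-1}. \<forall>t\<in>{1..N-1}. (s = t + 1 \<or> t = s + 1) \<longrightarrow>
               eqH N (serre N q (E s) (E t)) (\<lambda>w. 0)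
             \<and> eqH N (serre N q (F s) (F t)) (\<lambda>w. 0))))"
proof -
  interpret SL N q z
    using hq hq2 hN hz by unfold_locales
  have E: "(\<lambda>s. conv N (K_inv (s+1)) (lfun N q z (s+1) s)) = E"
    by (simp add: E_def fun_eq_iff)
  have F: "(\<lambda>s w. inverse ((q - inverse q)^2) * conv N (K_inv s) (rfun N q z s (s+1)) w) = F"
    by (simp add: F_def fun_eq_iff)
  show ?thesis
    unfolding K_def
    by (intro conjI ballI exI[of _ K_inv], unfold E F Let_def)
      (insert H_l_generated H_r_generated L_diag_commute prod_L_diag K_E_K_inv K_F_K_inv E_commute F_commute
        E_serre_adjacent F_serre R_diag[THEN eqH_sym] finite_dual_L_diag grouplike_L_diag finite_dual_K_inv
        L_diag_K_inv K_inv_L_diag, simp_all add: Un_assoc)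
qed

end
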